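(* (a) For any finite $d$--regular graph $G$ there exists a sequence of graphs $(G_i)_{i\geq0}$ with $G_0=G$, $G_i$ a $2$-lift of $G_{i-1}$ for $i\geq1$, such that $(G_i)$ Benjamini--Schramm converges to the infinite $d$--regular tree $\mathbb{T}_d$. (b) For any finite $(a,b)$--biregular bipartite graph $G$ there exists a sequence of graphs $(G_i)_{i\geq0}$ with $G_0=G$, $G_i$ a $2$-lift of $G_{i-1}$ for $i\geq1$, such that $(G_i)$ Benjamini--Schramm converges to the infinite $(a,b)$--biregular tree $\mathbb{T}_{a,b}$.
   Context: A graph $H$ is a $2$-lift of $G$ if $V(H)=V(G)\times\{0,1\}$ and for every edge $(u,v)\in E(G)$ exactly one of: $((u,0),(v,0)),((u,1),(v,1))\in E(H)$, or $((u,0),(v,1)),((u,1),(v,0))\in E(H)$; non-edges of $G$ give no edges in $H$. An $(a,b)$--biregular bipartite graph has bipartition $(A,B)$ with all vertices of $A$ of degree $a$ and all of $B$ of degree $b$. A sequence of finite $d$--regular graphs $(G_i)$ Benjamini--Schramm converges to $\mathbb{T}_d$ if for every $r\geq1$ the proportion of vertices $v$ of $G_i$ whose radius-$r$ ball, as a rooted graph, is isomorphic to the radius-$r$ ball of $\mathbb{T}_d$ tends to $1$. A sequence of finite $(a,b)$--biregular bipartite graphs Benjamini--Schramm converges to $\mathbb{T}_{a,b}$ (the random rooted tree which is $\mathbb{T}_{a,b}$ rooted at a vertex of degree $b$ with probability $\frac{a}{a+b}$ and at a vertex of degree $a$ with probability $\frac{b}{a+b}$) if for every $r\geq1$ the proportion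 of vertices $v$ of $G_i$ whose radius-$r$ ball is isomorphic, as a rooted graph, to the radius-$r$ ball of $\mathbb{T}_{a,b}$ around a vertex of the same degree as $v$ tends to $1$. *)

theory Defs
  imports Complex_Main
begin

definition simple_graph :: "'v set \<Rightarrow> 'v set set \<Rightarrow> bool" where
  "simple_graph V E \<longleftrightarrow> finite V \<and>
     (\<forall>e\<in>E. \<exists>u v. u \<in> V \<and> v \<in> V \<and> u \<noteq> v \<and> e = {u, v})"

definition degree :: "'v set set \<Rightarrow> 'v \<Rightarrow> nat" where
  "degree E v = card {e \<in> E. v \<in> e}"

definition regular_graph :: "'v set \<Rightarrow> 'v set set \<Rightarrow> nat \<Rightarrow> bool" where
  "regular_graph V E d \<longleftrightarrow> simple_graph V E \<and> (\<forall>v\<in>V. degree E v = d)"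

definition biregular_bipartite :: "'v set \<Rightarrow> 'v set set \<Rightarrow> nat \<Rightarrow> nat \<Rightarrow> bool" where
  "biregular_bipartite V E a b \<longleftrightarrow> simple_graph V E \<and>
     (\<exists>A B. A \<union> B = V \<and> A \<inter> B = {} \<and>
        (\<forall>e\<in>E. \<exists>u\<in>A. \<exists>w\<in>B. e = {u, w}) \<and>
        (\<forall>v\<in>A. degree E v = a) \<and> (\<forall>v\<in>B. degree E v = b))"

definition two_lift :: "'v set \<Rightarrow> 'v set set \<Rightarrow> ('v \<times> bool) set set \<Rightarrow> bool" where
  "two_lift V E H \<longleftrightarrow>
     H \<subseteq> {{(u, i), (v, j)} | u v i j. {u, v} \<in> E} \<and>
     (\<forall>u v. {u, v} \<in> E \<longrightarrow>
        (let par = {{(u, False), (v, False)}, {(u, True), (v, True)}};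
             crs = {{(u, False), (v, True)}, {(u, True), (v, False)}}
         in (par \<subseteq> H \<and> crs \<inter> H = {}) \<or> (crs \<subseteq> H \<and> par \<inter> H = {})))"

(* encoding of V(G_i) \<times> {0,1} into the common vertex type 'a \<times> bool list *)
definition enc :: "('a \<times> bool list) \<times> bool \<Rightarrow> 'a \<times> bool list" where
  "enc x = (fst (fst x), snd x # snd (fst x))"

definition lift_step :: "('a \<times> bool list) set \<Rightarrow> ('a \<times> bool list) set set
     \<Rightarrow> ('a \<times> bool list) set \<Rightarrow> ('a \<times> bool list) set set \<Rightarrow> bool" where
  "lift_step V E V' E' \<longleftrightarrow> V' = enc ` (V \<times> UNIV) \<and>
     (\<exists>H. two_lift V E H \<and> E' = (\<lambda>e. enc ` e) ` H)"

fun ball_verts :: "'v set set \<Rightarrow> 'v \<Rightarrow> nat \<Rightarrow> 'v set" where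
  "ball_verts E v 0 = {v}"
| "ball_verts E v (Suc r) = ball_verts E v r \<union> {y. \<exists>x\<in>ball_verts E v r. {x, y} \<in> E}"

definition ball_edges :: "'v set set \<Rightarrow> 'v \<Rightarrow> nat \<Rightarrow> 'v set set" where
  "ball_edges E v r = {e \<in> E. e \<subseteq> ball_verts E v r}"

definition rooted_iso :: "'v set \<Rightarrow> 'v set set \<Rightarrow> 'v \<Rightarrow> 'w set \<Rightarrow> 'w set set \<Rightarrow> 'w \<Rightarrow> bool" where
  "rooted_iso V1 E1 r1 V2 E2 r2 \<longleftrightarrow> (\<exists>f. bij_betw f V1 V2 \<and> f r1 = r2 \<and>
     (\<forall>x\<in>V1. \<forall>y\<in>V1. {x, y} \<in> E1 \<longleftrightarrow> {f x, f y} \<in> E2))"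

(* Infinite tree rooted at a vertex of degree p, whose vertices alternate degrees
   p (even depth) and q (odd depth). Vertices: words; parent of w@[c] is w; root [].
   T_d = tree_edges d d; T_{a,b} rooted at a degree-a vertex = tree_edges a b. *)
definition tree_word :: "nat \<Rightarrow> nat \<Rightarrow> nat list \<Rightarrow> bool" where
  "tree_word p q w \<longleftrightarrow> (\<forall>i<length w.
      w ! i < (if i = 0 then p else if odd i then q - 1 else p - 1))"

definition tree_edges :: "nat \<Rightarrow> nat \<Rightarrow> nat list set set" where
  "tree_edges p q = {{w, w @ [c]} | w c. tree_word p q (w @ [c])}"

definition ball_iso_tree :: "'v set set \<Rightarrow> 'v \<Rightarrow> nat \<Rightarrow> nat \<Rightarrow> nat \<Rightarrow> bool" where
  "ball_iso_tree E v r p q \<longleftrightarrow>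
     rooted_iso (ball_verts E v r) (ball_edges E v r) v
                (ball_verts (tree_edges p q) [] r) (ball_edges (tree_edges p q) [] r) []"

definition BS_conv_regular :: "(nat \<Rightarrow> 'v set) \<Rightarrow> (nat \<Rightarrow> 'v set set) \<Rightarrow> nat \<Rightarrow> bool" where
  "BS_conv_regular Vs Es d \<longleftrightarrow> (\<forall>r\<ge>1.
     (\<lambda>i. real (card {v \<in> Vs i. ball_iso_tree (Es i) v r d d}) / real (card (Vs i)))
       \<longlonglongrightarrow> 1)"

definition BS_conv_biregular :: "(nat \<Rightarrow> 'v set) \<Rightarrow> (nat \<Rightarrow> 'v set set) \<Rightarrow> nat \<Rightarrow> nat \<Rightarrow> bool" where
  "BS_conv_biregular Vs Es a b \<longleftrightarrow> (\<forall>r\<ge>1.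
     (\<lambda>i. real (card {v \<in> Vs i.
             (degree (Es i) v = a \<and> ball_iso_tree (Es i) v r a b) \<or>
             (degree (Es i) v = b \<and> ball_iso_tree (Es i) v r b a)}) / real (card (Vs i)))
       \<longlonglongrightarrow> 1)"

definition lift_sequence :: "'a set \<Rightarrow> 'a set set \<Rightarrow> (nat \<Rightarrow> ('a \<times> bool list) set)
     \<Rightarrow> (nat \<Rightarrow> ('a \<times> bool list) set set) \<Rightarrow> bool" where
  "lift_sequence V E Vs Es \<longleftrightarrow>
     Vs 0 = (\<lambda>v. (v, [])) ` V \<and> Es 0 = (\<lambda>e. (\<lambda>v. (v, [])) ` e) ` E \<and>
     (\<forall>i. lift_step (Vs i) (Es i) (Vs (Suc i)) (Es (Suc i)))"

end

theory Submission
  imports Defs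
begin

text \<open>If a graph has no cycle of length at most \<open>2r + 1\<close>, then following non-backtracking walks
  from a vertex maps the radius-\<open>r\<close> ball of the (bi)regular tree isomorphically onto the
  radius-\<open>r\<close> ball of the graph: a collision or an extra edge would close a short non-backtracking
  walk. So it suffices to find a tower of 2-lifts whose girth tends to infinity.

  A 2-lift is described by the set \<open>S\<close> of edges that cross between the sheets; a closed
  non-backtracking walk lifts to a closed walk iff it crosses an even number of times, and then it
  has exactly two lifts. If the girth is \<open>g\<close>, a closed non-backtracking walk of length \<open>g\<close> is a
  cycle and uses its first edge once, so toggling that edge in \<open>S\<close> swaps the parity: the walk is
  even for exactly half of all \<open>S\<close>. Averaging over \<open>S\<close> gives a lift with fewer closed
  non-backtracking walks of length \<open>g\<close> and none shorter. Repeating, they disappear after finitely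
  many lifts, and the girth grows beyond every bound.\<close>

section \<open>Neighbourhoods and non-backtracking walks\<close>

definition neighbours :: "'v set set \<Rightarrow> 'v \<Rightarrow> 'v set" where
  "neighbours E x = {y. {x, y} \<in> E}"

lemma neighbours_sym: "y \<in> neighbours E x \<longleftrightarrow> x \<in> neighbours E y"
  unfolding neighbours_def by (simp add: insert_commute)

lemma simple_graph_edgeD:
  assumes "simple_graph V E" "{x, y} \<in> E"
  shows "x \<in> V \<and> y \<in> V \<and> x \<noteq> y"
proof -
  obtain u w where "u \<in> V" "w \<in> V" "u \<noteq> w" "{x, y} = {u, w}"
    using assms unfolding simple_graph_def by blast
  then show ?thesis by (auto simp: doubleton_eq_iff)
qed

lemma simple_graph_finite: "simple_graph V E \<Longrightarrow> finite V"
  unfolding simple_graph_def by blast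

lemma simple_graph_finite_edges: "simple_graph V E \<Longrightarrow> finite E"
  unfolding simple_graph_def by (metis (no_types, lifting) Pow_iff empty_subsetI finite_Pow_iff
      insert_subset rev_finite_subset subsetI)

lemma neighbours_subset: "simple_graph V E \<Longrightarrow> neighbours E x \<subseteq> V"
  using simple_graph_edgeD[of V E x] unfolding neighbours_def by blast

lemma finite_neighbours: "simple_graph V E \<Longrightarrow> finite (neighbours E x)"
  using neighbours_subset simple_graph_finite finite_subset by metis

lemma degree_eq_card_neighbours:
  assumes "simple_graph V E"
  shows "degree E x = card (neighbours E x)"
proof -
  have "bij_betw (\<lambda>y. {x, y}) (neighbours E x) {e \<in> E. x \<in> e}"
  proof (rule bij_betwI')
    fix y z assume "y \<in> neighbours E x" "z \<in> neighbours E x"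
    then show "({x, y} = {x, z}) = (y = z)"
      using simple_graph_edgeD[OF assms] unfolding neighbours_def by (auto simp: doubleton_eq_iff)
  next
    fix e assume "e \<in> {e \<in> E. x \<in> e}"
    then obtain u w where "e \<in> E" "x \<in> e" "e = {u, w}"
      using assms unfolding simple_graph_def by blast
    then show "\<exists>y\<in>neighbours E x. e = {x, y}"
      unfolding neighbours_def by (auto simp: insert_commute)
  qed (simp add: neighbours_def)
  then show ?thesis unfolding degree_def by (simp add: bij_betw_same_card)
qed

lemma rooted_iso_sym:
  assumes iso: "rooted_iso V1 E1 r1 V2 E2 r2" and root: "r1 \<in> V1"
  shows "rooted_iso V2 E2 r2 V1 E1 r1"
proof -
  obtain f where f: "bij_betw f V1 V2" "f r1 = r2"
    and edges: "\<forall>x\<in>V1. \<forall>y\<in>V1. {x, y} \<in> E1 \<longleftrightarrow> {f x, f y} \<in> E2"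
    using iso unfolding rooted_iso_def by blast
  define g where "g = inv_into V1 f"
  have g: "bij_betw g V2 V1" unfolding g_def by (rule bij_betw_inv_into[OF f(1)])
  have "g r2 = r1" unfolding g_def using f root by (metis bij_betw_inv_into_left)
  moreover have "{x, y} \<in> E2 \<longleftrightarrow> {g x, g y} \<in> E1" if "x \<in> V2" "y \<in> V2" for x y
  proof -
    have "f (g x) = x" "f (g y) = y"
      unfolding g_def using f(1) that by (simp_all add: bij_betw_inv_into_right)
    moreover have "g x \<in> V1" "g y \<in> V1" using g that by (simp_all add: bij_betw_apply)
    ultimately show ?thesis using edges by metis
  qed
  ultimately show ?thesis unfolding rooted_iso_def using g by blast
qed

definition is_walk :: "'v set set \<Rightarrow> 'v list \<Rightarrow> bool" where
  "is_walk E xs \<longleftrightarrow> (\<forall>k. Suc k < length xs \<longrightarrow> {xs ! k, xs ! Suc k} \<in> E)"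

definition nonbacktracking :: "'v list \<Rightarrow> bool" where
  "nonbacktracking xs \<longleftrightarrow> (\<forall>k. Suc (Suc k) < length xs \<longrightarrow> xs ! k \<noteq> xs ! Suc (Suc k))"

text \<open>Closedness is not required to be cyclically non-backtracking; such a walk still contains a
  cycle, so \<open>girth_gt V E L\<close> says that the girth exceeds \<open>L\<close>.\<close>

definition closed_nb_walks :: "'v set \<Rightarrow> 'v set set \<Rightarrow> nat \<Rightarrow> 'v list set" where
  "closed_nb_walks V E l = {xs. length xs = Suc l \<and> set xs \<subseteq> V \<and> is_walk E xs \<and>
     nonbacktracking xs \<and> xs ! 0 = xs ! l}"

definition girth_gt :: "'v set \<Rightarrow> 'v set set \<Rightarrow> nat \<Rightarrow> bool" where
  "girth_gt V E L \<longleftrightarrow> (\<forall>l. 1 \<le> l \<longrightarrow> l \<le> L \<longrightarrow> closed_nb_walks V E l = {})"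

lemma girth_gt_mono: "girth_gt V E L \<Longrightarrow> L' \<le> L \<Longrightarrow> girth_gt V E L'"
  unfolding girth_gt_def by auto

lemma girth_gt_Suc: "girth_gt V E (Suc L) \<longleftrightarrow> girth_gt V E L \<and> closed_nb_walks V E (Suc L) = {}"
  unfolding girth_gt_def by (auto simp: le_Suc_eq)

lemma finite_closed_nb_walks: "finite V \<Longrightarrow> finite (closed_nb_walks V E l)"
  by (rule rev_finite_subset[OF finite_lists_length_eq[of V "Suc l"]])
    (auto simp: closed_nb_walks_def)

lemma is_walk_snoc: "is_walk E (xs @ [z]) \<longleftrightarrow> is_walk E xs \<and> (xs \<noteq> [] \<longrightarrow> {last xs, z} \<in> E)"
proof (cases "xs = []")
  case True then show ?thesis by (simp add: is_walk_def)
next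
  case False
  then obtain n where n: "length xs = Suc n" by (cases xs) auto
  have "is_walk E (xs @ [z]) \<longleftrightarrow> (\<forall>k<Suc n. {(xs@[z])!k, (xs@[z])!Suc k} \<in> E)"
    unfolding is_walk_def using n by simp
  also have "\<dots> \<longleftrightarrow> (\<forall>k<n. {(xs@[z])!k, (xs@[z])!Suc k} \<in> E) \<and> {(xs@[z])!n, (xs@[z])!Suc n} \<in> E"
    by (simp only: All_less_Suc conj_commute)
  also have "(\<forall>k<n. {(xs@[z])!k, (xs@[z])!Suc k} \<in> E) \<longleftrightarrow> (\<forall>k<n. {xs!k, xs!Suc k} \<in> E)"
    using n by (simp add: nth_append)
  also have "(\<forall>k<n. {xs!k, xs!Suc k} \<in> E) \<longleftrightarrow> is_walk E xs"
    unfolding is_walk_def using n by simp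
  also have "(xs@[z])!n = last xs" using n False by (simp add: nth_append last_conv_nth)
  also have "(xs@[z])!Suc n = z" using n by (simp add: nth_append)
  finally show ?thesis using False by simp
qed

lemma nonbacktracking_snoc: "nonbacktracking (xs @ [z]) \<longleftrightarrow> nonbacktracking xs
  \<and> (length xs \<ge> 2 \<longrightarrow> xs ! (length xs - 2) \<noteq> z)"
proof (cases "length xs \<ge> 2")
  case False
  then show ?thesis unfolding nonbacktracking_def by (auto simp: nth_append)
next
  case True
  then obtain n where n: "length xs = Suc (Suc n)" by (metis add_2_eq_Suc le_Suc_ex)
  have "nonbacktracking (xs @ [z]) \<longleftrightarrow> (\<forall>k<Suc n. (xs@[z])!k \<noteq> (xs@[z])!Suc (Suc k))"
    unfolding nonbacktracking_def using n by simp
  also have "\<dots> \<longleftrightarrow> (\<forall>k<n. (xs@[z])!k \<noteq> (xs@[z])!Suc (Suc k)) \<and> (xs@[z])!n \<noteq> (xs@[z])!Suc (Suc n)"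
    by (simp only: All_less_Suc conj_commute)
  also have "(\<forall>k<n. (xs@[z])!k \<noteq> (xs@[z])!Suc (Suc k)) \<longleftrightarrow> (\<forall>k<n. xs!k \<noteq> xs!Suc (Suc k))"
    using n by (simp add: nth_append)
  also have "(\<forall>k<n. xs!k \<noteq> xs!Suc (Suc k)) \<longleftrightarrow> nonbacktracking xs"
    unfolding nonbacktracking_def using n by simp
  also have "(xs@[z])!n = xs ! (length xs - 2)" using n by (simp add: nth_append)
  also have "(xs@[z])!Suc (Suc n) = z" using n by (simp add: nth_append)
  finally show ?thesis using True by simp
qed

lemma snoc_in_closed_nb_walks:
  assumes "is_walk E X" "nonbacktracking X" "set X \<subseteq> V" "length X = Suc n" "n \<ge> 1"
    and "x \<in> V" "{X ! n, x} \<in> E" "X ! (n - 1) \<noteq> x" "X ! 0 = x"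
  shows "X @ [x] \<in> closed_nb_walks V E (Suc n)"
proof -
  have "last X = X ! n" using assms(4)
    by (metis diff_Suc_1 last_conv_nth list.size(3) nat.distinct(1))
  then have "is_walk E (X @ [x])" using assms(1,4,7) by (auto simp: is_walk_snoc)
  moreover have "X ! (length X - 2) = X ! (n - 1)" using assms(4) by simp
  then have "nonbacktracking (X @ [x])" using assms(2,8) by (simp add: nonbacktracking_snoc)
  ultimately show ?thesis
    using assms(3-6,9) unfolding closed_nb_walks_def by (auto simp: nth_append)
qed

lemma closed_nb_walk_segment:
  assumes W: "W \<in> closed_nb_walks V E g" and ij: "i < j" "j \<le> g" and eq: "W!i = W!j"
  shows "drop i (take (Suc j) W) \<in> closed_nb_walks V E (j - i)"
proof -
  let ?X = "drop i (take (Suc j) W)"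
  have len: "length W = Suc g" and sW: "set W \<subseteq> V" and wW: "is_walk E W" and nW: "nonbacktracking W"
    using W unfolding closed_nb_walks_def by auto
  have lX: "length ?X = Suc (j - i)" using len ij by simp
  have nth: "\<And>k. k \<le> j - i \<Longrightarrow> ?X ! k = W ! (i + k)" using len ij by simp
  have "set ?X \<subseteq> set W" by (meson set_drop_subset set_take_subset subset_trans)
  then have "set ?X \<subseteq> V" using sW by blast
  moreover have "is_walk E ?X" unfolding is_walk_def
  proof (intro allI impI)
    fix k assume k: "Suc k < length ?X"
    then have "{W!(i+k), W!Suc (i+k)} \<in> E" using wW len lX ij unfolding is_walk_def by simp
    then show "{?X!k, ?X!Suc k} \<in> E" using nth k lX by simp
  qed
  moreover have "nonbacktracking ?X" unfolding nonbacktracking_def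
  proof (intro allI impI)
    fix k assume k: "Suc (Suc k) < length ?X"
    then have "W!(i+k) \<noteq> W!Suc (Suc (i+k))" using nW len lX ij unfolding nonbacktracking_def by simp
    then show "?X!k \<noteq> ?X!Suc (Suc k)" using nth k lX by simp
  qed
  moreover have "?X ! 0 = ?X ! (j - i)" using nth eq ij by simp
  ultimately show ?thesis using lX unfolding closed_nb_walks_def by simp
qed

lemma shortest_closed_nb_walk_first_edge_once:
  assumes simple: "simple_graph V E" and W: "W \<in> closed_nb_walks V E g" and g: "g \<ge> 1"
    and girth: "girth_gt V E (g - 1)" and j: "j < g" "{W ! j, W ! Suc j} = {W ! 0, W ! 1}"
  shows "j = 0"
proof -
  have len: "length W = Suc g" and wW: "is_walk E W" and nW: "nonbacktracking W" and cl: "W!0 = W!g"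
    using W unfolding closed_nb_walks_def by auto
  have distinct: "W!i \<noteq> W!j" if "i < j" "j < g" for i j
  proof
    assume "W!i = W!j"
    then have "drop i (take (Suc j) W) \<in> closed_nb_walks V E (j - i)"
      using closed_nb_walk_segment[OF W that(1)] that(2) by simp
    then show False using girth that unfolding girth_gt_def by auto
  qed
  have "g \<noteq> 1"
  proof
    assume "g = 1"
    then have "{W!0, W!0} \<in> E" using wW len cl unfolding is_walk_def by auto
    then show False using simple_graph_edgeD[OF simple] by blast
  qed
  moreover have "g \<noteq> 2"
  proof
    assume "g = 2"
    then have "W!0 \<noteq> W!2" using nW len unfolding nonbacktracking_def by (auto simp: numeral_2_eq_2)
    then show False using cl \<open>g = 2\<close> by simp
  qed
  ultimately have g3: "g \<ge> 3" using g by simp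
  show "j = 0"
  proof (rule ccontr)
    assume j0: "j \<noteq> 0"
    from j(2) consider "W!j = W!0" "W!Suc j = W!1" | "W!j = W!1" "W!Suc j = W!0"
      unfolding doubleton_eq_iff by blast
    then show False
    proof cases
      case 1 then show False using distinct[of 0 j] j j0 by simp
    next
      case 2
      have "j = 1" using 2 distinct[of 1 j] distinct[of j 1] j j0 g3
        by (metis less_linear nat_neq_iff One_nat_def less_Suc0)
      then have "W!2 = W!0" using 2 by (simp add: numeral_2_eq_2)
      then show False using distinct[of 0 2] g3 by simp
    qed
  qed
qed

definition tree_arity :: "nat \<Rightarrow> nat \<Rightarrow> nat \<Rightarrow> nat" where
  "tree_arity p q k = (if k = 0 then p else if odd k then q - 1 else p - 1)"

lemma tree_word_Nil[simp]: "tree_word p q []"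
  unfolding tree_word_def by simp

lemma tree_word_iff: "tree_word p q w \<longleftrightarrow> (\<forall>i<length w. w ! i < tree_arity p q i)"
  unfolding tree_word_def tree_arity_def by simp

lemma tree_word_snoc: "tree_word p q (w @ [c]) \<longleftrightarrow> tree_word p q w \<and> c < tree_arity p q (length w)"
  unfolding tree_word_iff by (auto simp: nth_append less_Suc_eq)

lemma tree_word_appendD: "tree_word p q (w @ w') \<Longrightarrow> tree_word p q w"
  unfolding tree_word_iff by (metis nth_append trans_less_add1 length_append)

abbreviation tree_ball :: "nat \<Rightarrow> nat \<Rightarrow> nat \<Rightarrow> nat list set" where
  "tree_ball p q r \<equiv> {w. tree_word p q w \<and> length w \<le> r}"

lemma tree_edges_doubleton_iff: "{x,y} \<in> tree_edges p q \<longleftrightarrow>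
   (\<exists>c. y = x @ [c] \<and> tree_word p q y) \<or> (\<exists>c. x = y @ [c] \<and> tree_word p q x)"
  unfolding tree_edges_def by (auto simp: doubleton_eq_iff)

definition tree_adj :: "nat list \<Rightarrow> nat list \<Rightarrow> bool" where
  "tree_adj x y \<longleftrightarrow> (\<exists>c. y = x @ [c]) \<or> (\<exists>c. x = y @ [c])"

lemma common_prefix_split: "\<exists>u a b. w1 = u @ a \<and> w2 = u @ b \<and> (a = [] \<or> b = [] \<or> hd a \<noteq> hd b)"
proof (induction w1 arbitrary: w2)
  case Nil then show ?case by auto
next
  case (Cons x w1)
  show ?case
  proof (cases w2)
    case Nil then show ?thesis by (intro exI[of _ "[]"] exI[of _ "x # w1"]) auto
  next
    case (Cons y w2')
    show ?thesis
    proof (cases "x = y")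
      case False then show ?thesis using Cons
        by (intro exI[of _ "[]"] exI[of _ "x # w1"] exI[of _ w2]) auto
    next
      case True
      obtain u a b where "w1 = u @ a" "w2' = u @ b" "a = [] \<or> b = [] \<or> hd a \<noteq> hd b"
        using Cons.IH by blast
      then show ?thesis using Cons True by (intro exI[of _ "x # u"] exI[of _ a] exI[of _ b]) auto
    qed
  qed
qed

text \<open>\<open>tree_path u a b\<close> is the path in the tree from \<open>u @ a\<close> up to \<open>u\<close> and down to \<open>u @ b\<close>.\<close>

definition tree_path_at :: "nat list \<Rightarrow> nat list \<Rightarrow> nat list \<Rightarrow> nat \<Rightarrow> nat list" where
  "tree_path_at u a b k = (if k \<le> length a then u @ take (length a - k) a
    else u @ take (k - length a) b)"

definition tree_path :: "nat list \<Rightarrow> nat list \<Rightarrow> nat list \<Rightarrow> nat list list" where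
  "tree_path u a b = map (tree_path_at u a b) [0..<length a + length b + 1]"

lemma tree_path_length[simp]: "length (tree_path u a b) = length a + length b + 1"
  unfolding tree_path_def by simp

lemma tree_path_nth: "k < length a + length b + 1 \<Longrightarrow> tree_path u a b ! k = tree_path_at u a b k"
  unfolding tree_path_def by (simp del: upt_Suc)

lemma tree_path_first: "tree_path u a b ! 0 = u @ a"
  by (simp add: tree_path_nth tree_path_at_def)

lemma tree_path_last: "tree_path u a b ! (length a + length b) = u @ b"
  by (simp add: tree_path_nth tree_path_at_def)

lemma tree_path_at_length: "k \<le> length a + length b \<Longrightarrow>
   length (tree_path_at u a b k) = length u + (if k \<le> length a then length a - k else k - length a)"
  unfolding tree_path_at_def by auto

lemma tree_path_at_prefix: "\<exists>z. (tree_path_at u a b k @ z = u @ a)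
  \<or> (tree_path_at u a b k @ z = u @ b)"
  unfolding tree_path_at_def by (metis append_assoc append_take_drop_id)

lemma tree_path_adj: "Suc k < length (tree_path u a b)
  \<Longrightarrow> tree_adj (tree_path u a b ! k) (tree_path u a b ! Suc k)"
proof -
  assume k: "Suc k < length (tree_path u a b)"
  then have k': "k < length a + length b" by simp
  show ?thesis
  proof (cases "Suc k \<le> length a")
    case True
    define j where "j = length a - Suc k"
    have j: "j < length a" "length a - k = Suc j" using True unfolding j_def by auto
    have "take (length a - k) a = take j a @ [a ! j]" using j by (simp add: take_Suc_conv_app_nth)
    moreover have "length a - Suc k = j" unfolding j_def ..
    ultimately have "tree_path_at u a b k = tree_path_at u a b (Suc k) @ [a ! j]"
      using True by (simp add: tree_path_at_def)
    then show ?thesis using k' by (simp add: tree_path_nth tree_adj_def)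
  next
    case False
    show ?thesis
    proof (cases "k = length a")
      case True
      then have "b \<noteq> []" using k' by auto
      then have "tree_path_at u a b (Suc k) = tree_path_at u a b k @ [b ! 0]"
        using True by (simp add: tree_path_at_def take_Suc_conv_app_nth)
      then show ?thesis using k' by (simp add: tree_path_nth tree_adj_def)
    next
      case False2: False
      then have "k - length a < length b" "Suc k - length a = Suc (k - length a)" using False k'
        by auto
      then have "tree_path_at u a b (Suc k) = tree_path_at u a b k @ [b ! (k - length a)]"
        using False False2 by (simp add: tree_path_at_def take_Suc_conv_app_nth)
      then show ?thesis using k' by (simp add: tree_path_nth tree_adj_def)
    qed
  qed
qed

lemma tree_path_nonbacktracking:
  assumes ab: "a = [] \<or> b = [] \<or> hd a \<noteq> hd b"
    and k: "Suc (Suc k) < length (tree_path u a b)"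
  shows "tree_path u a b ! k \<noteq> tree_path u a b ! Suc (Suc k)"
proof
  assume eq: "tree_path u a b ! k = tree_path u a b ! Suc (Suc k)"
  have k': "Suc (Suc k) \<le> length a + length b" using k by simp
  then have "tree_path_at u a b k = tree_path_at u a b (Suc (Suc k))" using eq
    by (simp add: tree_path_nth)
  then have "length (tree_path_at u a b k) = length (tree_path_at u a b (Suc (Suc k)))" by simp
  then have kk: "Suc k = length a" using k' by (simp add: tree_path_at_length split: if_splits)
  then have ne: "a \<noteq> []" "b \<noteq> []" using k' by auto
  have t1: "take 1 a = [hd a]" "take 1 b = [hd b]" using ne by (cases a; cases b; simp)+
  have "length a - k = 1" "Suc (Suc k) - length a = 1" using kk by auto
  then have "tree_path_at u a b k = u @ [hd a]" "tree_path_at u a b (Suc (Suc k)) = u @ [hd b]"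
    using kk t1 by (auto simp: tree_path_at_def)
  then show False using \<open>tree_path_at u a b k = tree_path_at u a b (Suc (Suc k))\<close> ab ne by simp
qed

lemma tree_path_in_tree_ball:
  assumes "u @ a \<in> tree_ball p q r" "u @ b \<in> tree_ball p q r" "t \<in> set (tree_path u a b)"
  shows "t \<in> tree_ball p q r"
proof -
  obtain k where "t = tree_path_at u a b k" using assms(3) unfolding tree_path_def by auto
  moreover obtain z where "tree_path_at u a b k @ z = u @ a \<or> tree_path_at u a b k @ z = u @ b"
    using tree_path_at_prefix by blast
  ultimately show ?thesis using assms(1,2) tree_word_appendD[of p q t z]
    by (metis (no_types, lifting) le_trans length_append le_add1 mem_Collect_eq)
qed

lemma ball_verts_subset_image_tree_ball:
  assumes root: "f [] = v"
    and onto: "\<And>w y. tree_word p q w \<Longrightarrow> {f w, y} \<in> E \<Longrightarrow>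
       (w \<noteq> [] \<and> y = f (butlast w)) \<or> (\<exists>c. tree_word p q (w @ [c]) \<and> f (w @ [c]) = y)"
  shows "ball_verts E v r \<subseteq> f ` tree_ball p q r"
proof (induction r)
  case 0 then show ?case using root by (auto intro!: image_eqI[of _ _ "[]"])
next
  case (Suc r)
  show ?case
  proof
    fix y assume "y \<in> ball_verts E v (Suc r)"
    then consider "y \<in> ball_verts E v r" | x where "x \<in> ball_verts E v r" "{x, y} \<in> E" by auto
    then show "y \<in> f ` tree_ball p q (Suc r)"
    proof cases
      case 1 then show ?thesis using Suc by auto
    next
      case 2
      then obtain w where w: "tree_word p q w" "length w \<le> r" "x = f w" using Suc by auto
      have "{f w, y} \<in> E" using 2(2) w(3) by simp
      from onto[OF w(1) this] show ?thesis
      proof (elim disjE conjE exE)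
        assume "w \<noteq> []" "y = f (butlast w)"
        moreover have "tree_word p q (butlast w)"
          using w(1) tree_word_appendD[of p q "butlast w" "[last w]"] calculation(1) by simp
        ultimately show ?thesis using w(2) by (auto intro!: image_eqI[of _ _ "butlast w"])
      next
        fix c assume "tree_word p q (w @ [c])" "f (w @ [c]) = y"
        then show ?thesis using w(2) by (auto intro!: image_eqI[of _ _ "w @ [c]"])
      qed
    qed
  qed
qed

lemma image_tree_ball_subset_ball_verts:
  assumes root: "f [] = v"
    and edge: "\<And>w c. tree_word p q (w @ [c]) \<Longrightarrow> {f w, f (w @ [c])} \<in> E"
  shows "f ` tree_ball p q r \<subseteq> ball_verts E v r"
proof (induction r)
  case 0 then show ?case using root by auto
next
  case (Suc r)
  show ?case
  proof
    fix y assume "y \<in> f ` tree_ball p q (Suc r)"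
    then obtain w where w: "tree_word p q w" "length w \<le> Suc r" "y = f w" by auto
    show "y \<in> ball_verts E v (Suc r)"
    proof (cases "length w \<le> r")
      case True then show ?thesis using Suc w by auto
    next
      case False
      then obtain u c where u: "w = u @ [c]" by (metis le0 rev_exhaust list.size(3))
      then have "f u \<in> ball_verts E v r" using Suc w False tree_word_appendD[of p q u "[c]"] by auto
      moreover have "{f u, y} \<in> E" using u w edge by auto
      ultimately show ?thesis by auto
    qed
  qed
qed

lemma ball_verts_eq_image_tree_ball:
  assumes "f [] = v"
    and "\<And>w c. tree_word p q (w @ [c]) \<Longrightarrow> {f w, f (w @ [c])} \<in> E"
    and "\<And>w y. tree_word p q w \<Longrightarrow> {f w, y} \<in> E \<Longrightarrow>
       (w \<noteq> [] \<and> y = f (butlast w)) \<or> (\<exists>c. tree_word p q (w @ [c]) \<and> f (w @ [c]) = y)"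
  shows "ball_verts E v r = f ` tree_ball p q r"
  using ball_verts_subset_image_tree_ball[of f v p q E r] image_tree_ball_subset_ball_verts[of f v p q E r]
    assms by blast

lemma ball_verts_tree: "ball_verts (tree_edges p q) [] r = tree_ball p q r"
proof -
  have "ball_verts (tree_edges p q) [] r = id ` tree_ball p q r"
  proof (rule ball_verts_eq_image_tree_ball)
    fix w y assume "tree_word p q w" "{id w, y} \<in> tree_edges p q"
    then show "(w \<noteq> [] \<and> y = id (butlast w)) \<or> (\<exists>c. tree_word p q (w @ [c]) \<and> id (w @ [c]) = y)"
      unfolding tree_edges_doubleton_iff by auto
  qed (auto simp: tree_edges_doubleton_iff)
  then show ?thesis by simp
qed

section \<open>Unrolling a biregular graph into the tree\<close>

text \<open>The sides need not be disjoint: a \<open>d\<close>-regular graph has sides \<open>P = Q = V\<close>.\<close>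

locale biregular_sides =
  fixes V :: "'v set" and E :: "'v set set" and P Q :: "'v set" and p q :: nat
  assumes simple: "simple_graph V E"
    and sides_cover: "P \<union> Q = V"
    and P_neighbours: "\<And>x. x \<in> P \<Longrightarrow> card (neighbours E x) = p \<and> neighbours E x \<subseteq> Q"
    and Q_neighbours: "\<And>x. x \<in> Q \<Longrightarrow> card (neighbours E x) = q \<and> neighbours E x \<subseteq> P"

lemma biregular_sides_swap: "biregular_sides V E P Q p q \<Longrightarrow> biregular_sides V E Q P q p"
  unfolding biregular_sides_def by blast

text \<open>\<open>cover E v w\<close> is the end of the non-backtracking walk from \<open>v\<close> whose \<open>k\<close>-th step goes to
  neighbour number \<open>w ! k\<close> in a fixed enumeration of the neighbours other than the previous vertex.
  \<open>cover_aux\<close> reads the word backwards and also returns the previous vertex.\<close>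

definition neighbour_list :: "'v set set \<Rightarrow> 'v \<Rightarrow> 'v list" where
  "neighbour_list E x = (SOME xs. distinct xs \<and> set xs = neighbours E x)"

lemma neighbour_list: "finite (neighbours E x) \<Longrightarrow> distinct (neighbour_list E x)
  \<and> set (neighbour_list E x) = neighbours E x"
  unfolding neighbour_list_def by (rule someI_ex) (metis finite_distinct_list)

definition child_list :: "'v set set \<Rightarrow> 'v \<Rightarrow> 'v option \<Rightarrow> 'v list" where
  "child_list E x po = (case po of None \<Rightarrow> neighbour_list E x | Some y \<Rightarrow> filter (\<lambda>z. z \<noteq> y) (neighbour_list E x))"

fun cover_aux :: "'v set set \<Rightarrow> 'v \<Rightarrow> nat list \<Rightarrow> 'v \<times> 'v option" where
  "cover_aux E v [] = (v, None)"
| "cover_aux E v (c # rw) = (child_list E (fst (cover_aux E v rw)) (snd (cover_aux E v rw)) ! c, Some (fst (cover_aux E v rw)))"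

definition cover :: "'v set set \<Rightarrow> 'v \<Rightarrow> nat list \<Rightarrow> 'v" where
  "cover E v w = fst (cover_aux E v (rev w))"

lemma cover_Nil[simp]: "cover E v [] = v"
  unfolding cover_def by simp

lemma cover_aux_snd: "snd (cover_aux E v (rev w)) = (if w = [] then None
  else Some (cover E v (butlast w)))"
  by (cases w rule: rev_exhaust) (auto simp: cover_def)

lemma cover_snoc: "cover E v (w @ [c]) = child_list E (cover E v w) (if w = [] then None
  else Some (cover E v (butlast w))) ! c"
  using cover_aux_snd[of E v w] by (simp add: cover_def)

locale rooted_biregular = biregular_sides +
  fixes v :: 'v
  assumes root_in_P: "v \<in> P"
begin

definition side :: "nat \<Rightarrow> 'v set" where
  "side k = (if even k then P else Q)"

lemma side_neighbours: "x \<in> side k \<Longrightarrow> neighbours E x \<subseteq> side (Suc k)"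
  using P_neighbours[of x] Q_neighbours[of x] unfolding side_def by (auto split: if_splits)

lemma side_in_V: "x \<in> side k \<Longrightarrow> x \<in> V"
  using sides_cover unfolding side_def by (auto split: if_splits)

lemma child_list_props:
  assumes x: "x \<in> side k" and po: "po = (if k = 0 then None else Some y)"
    and y: "k > 0 \<Longrightarrow> y \<in> neighbours E x"
  shows "distinct (child_list E x po) \<and> length (child_list E x po) = tree_arity p q k \<and>
         set (child_list E x po) = neighbours E x - (if k = 0 then {} else {y})"
proof -
  have fin: "finite (neighbours E x)" using finite_neighbours[OF simple] .
  note L = neighbour_list[OF fin]
  have cd: "card (neighbours E x) = (if even k then p else q)"
    using x P_neighbours Q_neighbours unfolding side_def by (auto split: if_splits)
  show ?thesis
  proof (cases "k = 0")
    case True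
    then show ?thesis using L cd po
      by (simp add: child_list_def tree_arity_def distinct_card[symmetric])
  next
    case False
    then have "y \<in> neighbours E x" using y by simp
    moreover have "distinct (filter (\<lambda>z. z \<noteq> y) (neighbour_list E x))" using L by simp
    moreover have "set (filter (\<lambda>z. z \<noteq> y) (neighbour_list E x)) = neighbours E x - {y}" using L
      by auto
    ultimately have "length (filter (\<lambda>z. z \<noteq> y) (neighbour_list E x)) = card (neighbours E x) - 1"
      by (metis distinct_card card_Diff_singleton fin)
    then show ?thesis using False L cd po \<open>set (filter _ _) = _\<close> \<open>distinct (filter _ _)\<close>
      by (simp add: child_list_def tree_arity_def)
  qed
qed

abbreviation children :: "nat list \<Rightarrow> 'v list" where
  "children w \<equiv> child_list E (cover E v w) (if w = [] then None else Some (cover E v (butlast w)))"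

lemma cover_invariant:
  "tree_word p q w \<Longrightarrow> cover E v w \<in> side (length w) \<and>
     (w \<noteq> [] \<longrightarrow> cover E v (butlast w) \<in> neighbours E (cover E v w)) \<and>
     (length w \<ge> 2 \<longrightarrow> cover E v w \<noteq> cover E v (butlast (butlast w)))"
proof (induction w rule: rev_induct)
  case Nil then show ?case using root_in_P by (simp add: side_def)
next
  case (snoc c w)
  then have tw: "tree_word p q w" and c: "c < tree_arity p q (length w)"
    by (auto simp: tree_word_snoc)
  have IH: "cover E v w \<in> side (length w)" "w \<noteq> []
    \<Longrightarrow> cover E v (butlast w) \<in> neighbours E (cover E v w)"
    using snoc.IH[OF tw] by auto
  have cp: "distinct (children w) \<and> length (children w) = tree_arity p q (length w) \<and>
      set (children w) = neighbours E (cover E v w) - (if length w = 0 then {}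
        else {cover E v (butlast w)})"
    by (rule child_list_props[OF IH(1)]) (use IH(2) in auto)
  have "c < length (children w)" using cp c by simp
  then have "children w ! c \<in> set (children w)" by (rule nth_mem)
  then have z: "cover E v (w @ [c]) \<in> set (children w)" by (simp add: cover_snoc)
  then have z2: "cover E v (w @ [c]) \<in> neighbours E (cover E v w)" "w \<noteq> []
    \<Longrightarrow> cover E v (w @ [c]) \<noteq> cover E v (butlast w)"
    using cp by auto
  have "cover E v (w @ [c]) \<in> side (length (w @ [c]))" using side_neighbours[OF IH(1)] z2 by auto
  moreover have "cover E v (butlast (w @ [c])) \<in> neighbours E (cover E v (w @ [c]))"
    using z2(1) neighbours_sym[of "cover E v w"] by simp
  moreover have "length (w @ [c]) \<ge> 2 \<longrightarrow> cover E v (w @ [c]) \<noteq> cover E v (butlast (butlast (w @ [c])))"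
    using z2 by (cases "w = []") auto
  ultimately show ?case by blast
qed

lemma children_props: "tree_word p q w \<Longrightarrow> distinct (children w)
  \<and> length (children w) = tree_arity p q (length w) \<and>
      set (children w) = neighbours E (cover E v w) - (if w = [] then {}
        else {cover E v (butlast w)})"
  using child_list_props[of "cover E v w" "length w" _ "cover E v (butlast w)"] cover_invariant[of w] by auto

lemma cover_in_V: "tree_word p q w \<Longrightarrow> cover E v w \<in> V"
  using cover_invariant side_in_V by blast

lemma cover_edge: "tree_word p q (w @ [c]) \<Longrightarrow> {cover E v w, cover E v (w @ [c])} \<in> E"
  using cover_invariant[of "w @ [c]"] unfolding neighbours_def by (simp add: insert_commute)

lemma cover_child_inj:
  assumes "tree_word p q (w @ [c1])" "tree_word p q (w @ [c2])" "cover E v (w @ [c1]) = cover E v (w @ [c2])"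
  shows "c1 = c2"
proof -
  have tw: "tree_word p q w" "c1 < tree_arity p q (length w)" "c2 < tree_arity p q (length w)"
    using assms by (auto simp: tree_word_snoc)
  then show ?thesis using children_props[OF tw(1)] assms(3)
    by (simp add: cover_snoc nth_eq_iff_index_eq)
qed

lemma neighbour_of_cover_cases:
  assumes tw: "tree_word p q w" and y: "y \<in> neighbours E (cover E v w)"
  shows "(w \<noteq> [] \<and> y = cover E v (butlast w)) \<or> (\<exists>c. tree_word p q (w @ [c])
    \<and> cover E v (w @ [c]) = y)"
proof (cases "w \<noteq> [] \<and> y = cover E v (butlast w)")
  case True then show ?thesis by blast
next
  case False
  then have "y \<in> set (children w)" using children_props[OF tw] y by auto
  then obtain c where "c < length (children w)" "children w ! c = y" by (auto simp: in_set_conv_nth)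
  then show ?thesis using children_props[OF tw] tw by (auto simp: tree_word_snoc cover_snoc)
qed

lemma cover_nonbacktracking:
  assumes "tree_word p q x" "tree_word p q y" "tree_word p q z" "tree_adj x y" "tree_adj y z" "x \<noteq> z"
  shows "cover E v x \<noteq> cover E v z"
proof -
  from assms(4,5) consider
      (descend) c1 c2 where "y = x @ [c1]" "z = y @ [c2]"
    | (return) c1 c2 where "y = x @ [c1]" "y = z @ [c2]"
    | (siblings) c1 c2 where "x = y @ [c1]" "z = y @ [c2]"
    | (ascend) c1 c2 where "x = y @ [c1]" "y = z @ [c2]"
    unfolding tree_adj_def by blast
  then show ?thesis
  proof cases
    case descend then show ?thesis using cover_invariant[OF assms(3)] by (auto simp: butlast_append)
  next
    case return then show ?thesis using assms(6) by auto
  next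
    case siblings then show ?thesis using cover_child_inj[of y c1 c2] assms by auto
  next
    case ascend then show ?thesis using cover_invariant[OF assms(1)] by (auto simp: butlast_append)
  qed
qed

lemma cover_tree_adj_edge: "tree_word p q x \<Longrightarrow> tree_word p q y \<Longrightarrow> tree_adj x y
  \<Longrightarrow> {cover E v x, cover E v y} \<in> E"
  unfolding tree_adj_def using cover_edge by (auto simp: insert_commute)

lemma map_cover_nb_walk:
  assumes tw: "\<forall>t\<in>set ts. tree_word p q t"
    and tn: "\<forall>k. Suc k < length ts \<longrightarrow> tree_adj (ts!k) (ts!Suc k)"
    and nb: "nonbacktracking ts"
  shows "is_walk E (map (cover E v) ts) \<and> nonbacktracking (map (cover E v) ts)"
proof
  show "is_walk E (map (cover E v) ts)" unfolding is_walk_def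
    using tw tn cover_tree_adj_edge by (simp add: nth_mem)
  show "nonbacktracking (map (cover E v) ts)" unfolding nonbacktracking_def
  proof (intro allI impI)
    fix k assume k: "Suc (Suc k) < length (map (cover E v) ts)"
    then show "map (cover E v) ts ! k \<noteq> map (cover E v) ts ! Suc (Suc k)"
      using cover_nonbacktracking[of "ts!k" "ts!Suc k" "ts!Suc (Suc k)"] tw tn[rule_format, of k] tn[rule_format, of "Suc k"]
        nb[unfolded nonbacktracking_def, rule_format, of k] by (simp add: nth_mem)
  qed
qed

lemma cover_tree_path_nb_walk:
  assumes "u @ a \<in> tree_ball p q r" "u @ b \<in> tree_ball p q r" "a = [] \<or> b = [] \<or> hd a \<noteq> hd b"
  shows "is_walk E (map (cover E v) (tree_path u a b))
    \<and> nonbacktracking (map (cover E v) (tree_path u a b))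
     \<and> set (map (cover E v) (tree_path u a b)) \<subseteq> V"
proof -
  have tw: "\<forall>t\<in>set (tree_path u a b). tree_word p q t" using tree_path_in_tree_ball[OF assms(1,2)]
    by blast
  have "nonbacktracking (tree_path u a b)" unfolding nonbacktracking_def
    using tree_path_nonbacktracking[OF assms(3)] by blast
  then show ?thesis using map_cover_nb_walk[OF tw] tree_path_adj cover_in_V tw by auto
qed

lemma cover_inj_on_tree_ball:
  assumes ns: "girth_gt V E (2 * r)" and w: "w1 \<in> tree_ball p q r" "w2 \<in> tree_ball p q r" and eq: "cover E v w1 = cover E v w2"
  shows "w1 = w2"
proof (rule ccontr)
  assume ne: "w1 \<noteq> w2"
  obtain u a b where uab: "w1 = u @ a" "w2 = u @ b" "a = [] \<or> b = [] \<or> hd a \<noteq> hd b"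
    using common_prefix_split by blast
  define W where "W = map (cover E v) (tree_path u a b)"
  have l1: "length a + length b \<ge> 1" using ne uab by (cases a; cases b) auto
  have l2: "length a + length b \<le> 2 * r" using w uab by auto
  have tw: "is_walk E W" "nonbacktracking W" "set W \<subseteq> V"
    using cover_tree_path_nb_walk[of u a r b] uab w unfolding W_def by auto
  have "W ! 0 = cover E v w1" unfolding W_def using uab by (simp add: tree_path_first)
  moreover have "W ! (length a + length b) = cover E v w2" unfolding W_def using uab
    by (simp add: tree_path_last)
  moreover have "length W = Suc (length a + length b)" unfolding W_def by simp
  ultimately have "W \<in> closed_nb_walks V E (length a + length b)" using tw eq
    unfolding closed_nb_walks_def by simp
  then show False using ns l1 l2 unfolding girth_gt_def by blast
qed

text \<open>The image of the tree path from \<open>w1\<close> to \<open>w2\<close>, closed by the edge back to \<open>w1\<close>, would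
  be a short closed non-backtracking walk; it does not backtrack at the end because the last inner
  vertex \<open>t\<close> of the path is adjacent to \<open>w2\<close>, hence differs from \<open>w1\<close>.\<close>

lemma cover_edge_tree_adj:
  assumes girth: "girth_gt V E (2 * r + 1)" and w: "w1 \<in> tree_ball p q r" "w2 \<in> tree_ball p q r"
    and e: "{cover E v w1, cover E v w2} \<in> E"
  shows "tree_adj w1 w2"
proof (rule ccontr)
  assume not_adj: "\<not> tree_adj w1 w2"
  have "w1 \<noteq> w2" using e simple_graph_edgeD[OF simple] by auto
  obtain u a b where uab: "w1 = u @ a" "w2 = u @ b" "a = [] \<or> b = [] \<or> hd a \<noteq> hd b"
    using common_prefix_split by blast
  define n where "n = length a + length b"
  define X where "X = map (cover E v) (tree_path u a b)"
  have n: "1 \<le> n" "n \<le> 2 * r" using \<open>w1 \<noteq> w2\<close> w uab unfolding n_def by (cases a; cases b; auto)+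
  define t where "t = tree_path u a b ! (n - 1)"
  have "t \<in> tree_ball p q r"
    using tree_path_in_tree_ball[of u a p q r b t] uab w unfolding t_def n_def by simp
  moreover have "Suc (n - 1) = n" using n by simp
  then have "tree_adj t w2"
    using tree_path_adj[of "n - 1" u a b] uab(2) tree_path_last[of u a b] unfolding t_def n_def
      by simp
  then have "t \<noteq> w1" using not_adj unfolding tree_adj_def by auto
  ultimately have "cover E v t \<noteq> cover E v w1"
    using cover_inj_on_tree_ball[OF girth_gt_mono[OF girth] _ w(1)] by auto
  moreover have "X ! n = cover E v w2" "X ! (n - 1) = cover E v t" "X ! 0 = cover E v w1"
    unfolding X_def t_def n_def using n uab by (simp_all add: tree_path_first tree_path_last)
  moreover have "is_walk E X" "nonbacktracking X" "set X \<subseteq> V"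
    using cover_tree_path_nb_walk[of u a r b] uab w unfolding X_def by blast+
  moreover have "length X = Suc n" unfolding X_def n_def by simp
  ultimately have "X @ [cover E v w1] \<in> closed_nb_walks V E (Suc n)"
    using e cover_in_V w(1) n(1) by (intro snoc_in_closed_nb_walks) (auto simp: insert_commute)
  then show False using girth n unfolding girth_gt_def by auto
qed

lemma ball_verts_eq_cover_image: "ball_verts E v r = cover E v ` tree_ball p q r"
  by (rule ball_verts_eq_image_tree_ball)
    (auto simp: cover_edge neighbour_of_cover_cases neighbours_def)

lemma cover_edge_iff_tree_adj:
  assumes "girth_gt V E (2 * r + 1)" "w1 \<in> tree_ball p q r" "w2 \<in> tree_ball p q r"
  shows "{cover E v w1, cover E v w2} \<in> E \<longleftrightarrow> tree_adj w1 w2"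
  using cover_edge_tree_adj[OF assms] cover_tree_adj_edge assms(2,3) by blast

lemma ball_iso_tree_if_girth_gt:
  assumes girth: "girth_gt V E (2 * r + 1)"
  shows "ball_iso_tree E v r p q"
proof -
  have "girth_gt V E (2 * r)" using girth_gt_mono[OF girth] by simp
  then have inj: "inj_on (cover E v) (tree_ball p q r)"
    using cover_inj_on_tree_ball by (auto intro: inj_onI)
  have "{w1, w2} \<in> ball_edges (tree_edges p q) [] r \<longleftrightarrow>
        {cover E v w1, cover E v w2} \<in> ball_edges E v r"
    if "w1 \<in> tree_ball p q r" "w2 \<in> tree_ball p q r" for w1 w2
  proof -
    have "{w1, w2} \<in> ball_edges (tree_edges p q) [] r \<longleftrightarrow> tree_adj w1 w2"
      using that unfolding ball_edges_def ball_verts_tree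
      by (auto simp: tree_edges_doubleton_iff tree_adj_def)
    moreover have "{cover E v w1, cover E v w2} \<in> ball_edges E v r \<longleftrightarrow>
        {cover E v w1, cover E v w2} \<in> E"
      using that ball_verts_eq_cover_image unfolding ball_edges_def by auto
    ultimately show ?thesis using cover_edge_iff_tree_adj[OF girth that] by simp
  qed
  then have "rooted_iso (tree_ball p q r) (ball_edges (tree_edges p q) [] r) []
      (ball_verts E v r) (ball_edges E v r) v"
    unfolding rooted_iso_def bij_betw_def using inj ball_verts_eq_cover_image
    by (intro exI[of _ "cover E v"]) simp
  then show ?thesis
    unfolding ball_iso_tree_def ball_verts_tree by (rule rooted_iso_sym) simp
qed

end

section \<open>Signed 2-lifts\<close>

definition base :: "'a \<times> bool list \<Rightarrow> 'a \<times> bool list" where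
  "base x = (fst x, tl (snd x))"
definition sheet :: "'a \<times> bool list \<Rightarrow> bool" where
  "sheet x = hd (snd x)"

lemma base_enc[simp]: "base (enc (x, b)) = x" unfolding base_def enc_def by simp
lemma sheet_enc[simp]: "sheet (enc (x, b)) = b" unfolding sheet_def enc_def by simp
lemma enc_eq[simp]: "enc x = enc y \<longleftrightarrow> x = y"
  unfolding enc_def by (cases x; cases y) auto
lemma inj_enc: "inj enc"
  by (rule injI) simp

lemma inj_image_enc: "inj (image enc)"
  by (rule injI) (simp add: inj_image_eq_iff[OF inj_enc])

lemma enc_base_sheet: "snd x \<noteq> [] \<Longrightarrow> enc (base x, sheet x) = x"
  unfolding enc_def base_def sheet_def by (cases x) auto

lemma lift_verts_iff: "x \<in> enc ` (V \<times> UNIV) \<longleftrightarrow> snd x \<noteq> [] \<and> base x \<in> V"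
proof
  assume "x \<in> enc ` (V \<times> UNIV)" then show "snd x \<noteq> [] \<and> base x \<in> V" by (auto simp: enc_def base_def)
next
  assume "snd x \<noteq> [] \<and> base x \<in> V"
  then show "x \<in> enc ` (V \<times> UNIV)" using enc_base_sheet[of x]
    by (metis UNIV_I mem_Sigma_iff rev_image_eqI)
qed

definition signed_two_lift :: "'v set set \<Rightarrow> 'v set set \<Rightarrow> ('v \<times> bool) set set" where
  "signed_two_lift E S = {{(u, i), (v, i \<noteq> ({u, v} \<in> S))} | u v i. {u, v} \<in> E}"

definition signed_lift ::
    "('a \<times> bool list) set set \<Rightarrow> ('a \<times> bool list) set set \<Rightarrow> ('a \<times> bool list) set set" where
  "signed_lift E S = (\<lambda>e. enc ` e) ` signed_two_lift E S"

lemma signed_two_lift_mem: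
  "{(u, i), (v, j)} \<in> signed_two_lift E S \<longleftrightarrow> {u, v} \<in> E \<and> j = (i \<noteq> ({u, v} \<in> S))"
proof
  assume "{(u, i), (v, j)} \<in> signed_two_lift E S"
  then obtain u' v' i' where e: "{u', v'} \<in> E"
    and eq: "{(u, i), (v, j)} = {(u', i'), (v', i' \<noteq> ({u', v'} \<in> S))}"
    unfolding signed_two_lift_def by (auto simp only: mem_Collect_eq)
  from eq consider "(u, i) = (u', i') \<and> (v, j) = (v', i' \<noteq> ({u', v'} \<in> S))"
    | "(u, i) = (v', i' \<noteq> ({u', v'} \<in> S)) \<and> (v, j) = (u', i')"
    unfolding doubleton_eq_iff by blast
  then show "{u, v} \<in> E \<and> j = (i \<noteq> ({u, v} \<in> S))"
  proof cases
    case 1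
    then show ?thesis using e by simp
  next
    case 2
    then have "u = v'" "v = u'" "j = i'" "i = (i' \<noteq> ({u', v'} \<in> S))" by simp_all
    then show ?thesis using e by (cases i'; cases "{u', v'} \<in> S") (simp_all add: insert_commute)
  qed
next
  assume "{u, v} \<in> E \<and> j = (i \<noteq> ({u, v} \<in> S))"
  then show "{(u, i), (v, j)} \<in> signed_two_lift E S" unfolding signed_two_lift_def
    by (intro CollectI exI[of _ u] exI[of _ v] exI[of _ i]) simp
qed

lemma two_lift_signed_two_lift: "two_lift V E (signed_two_lift E S)"
  unfolding two_lift_def
proof (intro conjI allI impI)
  show "signed_two_lift E S \<subseteq> {{(u, i), (v, j)} |u v i j. {u, v} \<in> E}"
    unfolding signed_two_lift_def by blast
next
  fix u v assume "{u, v} \<in> E"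
  then show "let par = {{(u, False), (v, False)}, {(u, True), (v, True)}};
            crs = {{(u, False), (v, True)}, {(u, True), (v, False)}}
        in par \<subseteq> signed_two_lift E S \<and> crs \<inter> signed_two_lift E S = {} \<or>
           crs \<subseteq> signed_two_lift E S \<and> par \<inter> signed_two_lift E S = {}"
    by (cases "{u, v} \<in> S") (auto simp: signed_two_lift_mem)
qed

lemma signed_lift_mem:
  "{enc (u, i), enc (v, j)} \<in> signed_lift E S \<longleftrightarrow> {u, v} \<in> E \<and> j = (i \<noteq> ({u, v} \<in> S))"
proof -
  have "{enc (u, i), enc (v, j)} = enc ` {(u, i), (v, j)}" by simp
  then have "{enc (u, i), enc (v, j)} \<in> signed_lift E S \<longleftrightarrow> {(u, i), (v, j)} \<in> signed_two_lift E S"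
    unfolding signed_lift_def using inj_image_mem_iff[OF inj_image_enc] by metis
  then show ?thesis by (simp add: signed_two_lift_mem)
qed

lemma signed_lift_elem: "e \<in> signed_lift E S \<Longrightarrow> z \<in> e \<Longrightarrow> snd z \<noteq> []"
  unfolding signed_lift_def by (auto simp: enc_def)

lemma neighbours_signed_lift:
  "neighbours (signed_lift E S) (enc (y,b)) = (\<lambda>x. enc (x, b \<noteq> ({y,x} \<in> S))) ` neighbours E y"
proof
  show "neighbours (signed_lift E S) (enc (y,b)) \<subseteq> (\<lambda>x. enc (x, b \<noteq> ({y,x} \<in> S))) ` neighbours E y"
  proof
    fix z assume "z \<in> neighbours (signed_lift E S) (enc (y,b))"
    then have z: "{enc (y,b), z} \<in> signed_lift E S" unfolding neighbours_def by simp
    then have "snd z \<noteq> []" using signed_lift_elem by blast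
    then have zz: "z = enc (base z, sheet z)" using enc_base_sheet by metis
    then have "{y, base z} \<in> E \<and> sheet z = (b \<noteq> ({y, base z} \<in> S))" using z signed_lift_mem by metis
    then have "z = enc (base z, b \<noteq> ({y, base z} \<in> S))" "base z \<in> neighbours E y"
      using zz unfolding neighbours_def by auto
    then show "z \<in> (\<lambda>x. enc (x, b \<noteq> ({y,x} \<in> S))) ` neighbours E y"
      by (rule image_eqI)
  qed
next
  show "(\<lambda>x. enc (x, b \<noteq> ({y,x} \<in> S))) ` neighbours E y \<subseteq> neighbours (signed_lift E S) (enc (y,b))"
    unfolding neighbours_def by (auto simp: signed_lift_mem)
qed

lemma card_neighbours_signed_lift: "card (neighbours (signed_lift E S) (enc (y,b))) = card (neighbours E y)"
  unfolding neighbours_signed_lift by (rule card_image) (auto intro: inj_onI)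

lemma simple_graph_signed_lift:
  assumes simple: "simple_graph V E"
  shows "simple_graph (enc ` (V \<times> UNIV)) (signed_lift E S)"
  unfolding simple_graph_def
proof (intro conjI ballI)
  show "finite (enc ` (V \<times> UNIV))" using simple_graph_finite[OF simple] by simp
next
  fix e assume "e \<in> signed_lift E S"
  then obtain u v i where e: "{u,v} \<in> E" "e = {enc (u, i), enc (v, i \<noteq> ({u,v} \<in> S))}"
    unfolding signed_lift_def signed_two_lift_def by auto
  then have "u \<in> V" "v \<in> V" "u \<noteq> v" using simple_graph_edgeD[OF simple] by auto
  then have "enc (u, i) \<in> enc ` (V \<times> UNIV)" "enc (v, i \<noteq> ({u,v} \<in> S)) \<in> enc ` (V \<times> UNIV)"
    "enc (u, i) \<noteq> enc (v, i \<noteq> ({u,v} \<in> S))" by auto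
  then show "\<exists>u v. u \<in> enc ` (V \<times> UNIV) \<and> v \<in> enc ` (V \<times> UNIV) \<and> u \<noteq> v \<and> e = {u, v}"
    using e(2) by (intro exI[of _ "enc (u, i)"] exI[of _ "enc (v, i \<noteq> ({u,v} \<in> S))"]) simp
qed

lemma biregular_sides_signed_lift:
  assumes "biregular_sides V E P Q p q"
  shows "biregular_sides (enc ` (V \<times> UNIV)) (signed_lift E S) (enc ` (P \<times> UNIV)) (enc ` (Q \<times> UNIV)) p q"
proof -
  interpret biregular_sides V E P Q p q by fact
  have sides: "card (neighbours (signed_lift E S) x) = card (neighbours E y) \<and>
      (neighbours E y \<subseteq> Y \<longrightarrow> neighbours (signed_lift E S) x \<subseteq> enc ` (Y \<times> UNIV))"
    if "x = enc (y, b)" for x y b and Y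
    using that card_neighbours_signed_lift[of E S y b] by (auto simp: neighbours_signed_lift)
  show ?thesis
  proof
    show "simple_graph (enc ` (V \<times> UNIV)) (signed_lift E S)"
      by (rule simple_graph_signed_lift[OF simple])
    show "enc ` (P \<times> UNIV) \<union> enc ` (Q \<times> UNIV) = enc ` (V \<times> UNIV)"
      using sides_cover by blast
  next
    fix x assume "x \<in> enc ` (P \<times> UNIV)"
    then show "card (neighbours (signed_lift E S) x) = p \<and>
        neighbours (signed_lift E S) x \<subseteq> enc ` (Q \<times> UNIV)"
      using sides P_neighbours by blast
  next
    fix x assume "x \<in> enc ` (Q \<times> UNIV)"
    then show "card (neighbours (signed_lift E S) x) = q \<and>
        neighbours (signed_lift E S) x \<subseteq> enc ` (P \<times> UNIV)"
      using sides Q_neighbours by blast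
  qed
qed

definition sign_count :: "'v set set \<Rightarrow> 'v list \<Rightarrow> nat \<Rightarrow> nat" where
  "sign_count S xs k = card {j. j < k \<and> {xs!j, xs!Suc j} \<in> S}"

lemma sign_count_0[simp]: "sign_count S xs 0 = 0" unfolding sign_count_def by simp
lemma sign_count_empty[simp]: "sign_count {} xs k = 0" unfolding sign_count_def by simp
lemma sign_count_Suc: "sign_count S xs (Suc k) = sign_count S xs k + (if {xs!k, xs!Suc k} \<in> S then 1 else 0)"
proof (cases "{xs!k, xs!Suc k} \<in> S")
  case True
  then have "{j. j < Suc k \<and> {xs!j, xs!Suc j} \<in> S} = insert k {j. j < k \<and> {xs!j, xs!Suc j} \<in> S}"
    by (auto simp: less_Suc_eq)
  then show ?thesis using True unfolding sign_count_def by simp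
next
  case False
  then have "{j. j < Suc k \<and> {xs!j, xs!Suc j} \<in> S} = {j. j < k \<and> {xs!j, xs!Suc j} \<in> S}"
    by (auto simp: less_Suc_eq)
  then show ?thesis using False unfolding sign_count_def by simp
qed

lemma lift_vertD: "x \<in> enc ` (V \<times> UNIV) \<Longrightarrow> x = enc (base x, sheet x) \<and> base x \<in> V"
  using lift_verts_iff enc_base_sheet by metis

lemma signed_lift_edgeD:
  assumes x: "x \<in> enc ` (V \<times> UNIV)" and y: "y \<in> enc ` (V \<times> UNIV)" and e: "{x,y} \<in> signed_lift E S"
  shows "{base x, base y} \<in> E \<and> sheet y = (sheet x \<noteq> ({base x, base y} \<in> S))"
proof -
  have "{enc (base x, sheet x), enc (base y, sheet y)} \<in> signed_lift E S"
    using lift_vertD[OF x] lift_vertD[OF y] e by simp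
  then show ?thesis by (simp add: signed_lift_mem)
qed

lemma lift_vert_eqI:
  assumes "x \<in> enc ` (V \<times> UNIV)" "y \<in> enc ` (V \<times> UNIV)" "base x = base y" "sheet x = sheet y"
  shows "x = y"
proof -
  obtain a i b j where "x = enc (a, i)" "y = enc (b, j)" using assms(1,2) by blast
  then show ?thesis using assms(3,4) by simp
qed

lemma closed_nb_walk_project:
  assumes W: "W \<in> closed_nb_walks (enc ` (V \<times> UNIV)) (signed_lift E S) l"
  shows "map base W \<in> closed_nb_walks V E l"
proof -
  let ?V' = "enc ` (V \<times> UNIV)"
  have len: "length W = Suc l" and sW: "set W \<subseteq> ?V'" and wW: "is_walk (signed_lift E S) W"
    and nW: "nonbacktracking W" and cW: "W!0 = W!l"
    using W unfolding closed_nb_walks_def by auto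
  have inV: "\<And>k. k < length W \<Longrightarrow> W!k \<in> ?V'" using sW nth_mem by blast
  have step: "\<And>k. Suc k < length W \<Longrightarrow> {base (W!k), base (W!Suc k)} \<in> E \<and>
       sheet (W!Suc k) = (sheet (W!k) \<noteq> ({base (W!k), base (W!Suc k)} \<in> S))"
    using signed_lift_edgeD inV wW unfolding is_walk_def by (metis Suc_lessD)
  have "is_walk E (map base W)" unfolding is_walk_def using step by simp
  moreover have "nonbacktracking (map base W)" unfolding nonbacktracking_def
  proof (intro allI impI notI)
    fix k assume k: "Suc (Suc k) < length (map base W)"
      and eq: "map base W ! k = map base W ! Suc (Suc k)"
    then have "base (W!k) = base (W!Suc (Suc k))" by simp
    then have "{base (W!Suc k), base (W!Suc (Suc k))} = {base (W!k), base (W!Suc k)}"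
      by (simp only: insert_commute)
    moreover have "sheet (W!Suc k) = (sheet (W!k) \<noteq> ({base (W!k), base (W!Suc k)} \<in> S))"
      "sheet (W!Suc (Suc k)) = (sheet (W!Suc k) \<noteq> ({base (W!Suc k), base (W!Suc (Suc k))} \<in> S))"
      using step[of k] step[of "Suc k"] k by simp_all
    ultimately have "sheet (W!k) = sheet (W!Suc (Suc k))" by (simp only:) blast
    then have "W!k = W!Suc (Suc k)"
      using \<open>base (W!k) = base (W!Suc (Suc k))\<close> k by (intro lift_vert_eqI[OF inV inV]) simp_all
    then show False using nW k unfolding nonbacktracking_def by simp
  qed
  moreover have "set (map base W) \<subseteq> V" using sW lift_vertD by auto
  ultimately show ?thesis using len cW unfolding closed_nb_walks_def by simp
qed

lemma girth_gt_signed_lift: "girth_gt V E L \<Longrightarrow> girth_gt (enc ` (V \<times> UNIV)) (signed_lift E S) L"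
  unfolding girth_gt_def using closed_nb_walk_project by blast

lemma sheet_parity:
  assumes sW: "set W \<subseteq> enc ` (V \<times> UNIV)" and wW: "is_walk (signed_lift E S) W"
  shows "k < length W \<Longrightarrow> sheet (W!k) = (sheet (W!0) \<noteq> odd (sign_count S (map base W) k))"
proof (induction k)
  case 0 then show ?case by simp
next
  case (Suc k)
  have inV: "\<And>k. k < length W \<Longrightarrow> W!k \<in> enc ` (V \<times> UNIV)" using sW nth_mem by blast
  have "{W!k, W!Suc k} \<in> signed_lift E S" using wW Suc.prems unfolding is_walk_def by simp
  then have "sheet (W!Suc k) = (sheet (W!k) \<noteq> ({base (W!k), base (W!Suc k)} \<in> S))"
    using signed_lift_edgeD[OF inV inV] Suc.prems by simp
  moreover have "sign_count S (map base W) (Suc k) =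
      sign_count S (map base W) k + (if {base (W!k), base (W!Suc k)} \<in> S then 1 else 0)"
    using Suc.prems by (simp add: sign_count_Suc)
  ultimately show ?case using Suc by auto
qed

lemma inj_on_project_closed_nb_walks:
  "inj_on (\<lambda>W. (map base W, sheet (W!0))) (closed_nb_walks (enc ` (V \<times> UNIV)) (signed_lift E S) l)"
proof (rule inj_onI)
  fix W1 W2
  assume W1: "W1 \<in> closed_nb_walks (enc ` (V \<times> UNIV)) (signed_lift E S) l"
    and W2: "W2 \<in> closed_nb_walks (enc ` (V \<times> UNIV)) (signed_lift E S) l"
    and eq: "(map base W1, sheet (W1!0)) = (map base W2, sheet (W2!0))"
  have s1: "set W1 \<subseteq> enc ` (V \<times> UNIV)" "is_walk (signed_lift E S) W1"
    and s2: "set W2 \<subseteq> enc ` (V \<times> UNIV)" "is_walk (signed_lift E S) W2"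
    using W1 W2 unfolding closed_nb_walks_def by auto
  from eq have m: "map base W1 = map base W2" and b: "sheet (W1!0) = sheet (W2!0)" by simp_all
  have l: "length W1 = length W2" using m by (metis length_map)
  show "W1 = W2"
  proof (rule nth_equalityI[OF l])
    fix k assume k1: "k < length W1"
    then have k2: "k < length W2" using l by simp
    have "W1!k \<in> enc ` (V \<times> UNIV)" "W2!k \<in> enc ` (V \<times> UNIV)"
      using s1(1) s2(1) k1 k2 by (meson nth_mem subsetD)+
    moreover have "base (W1!k) = base (W2!k)" using m k1 k2 by (metis nth_map)
    moreover have "sheet (W1!k) = sheet (W2!k)"
      using sheet_parity[OF s1 k1] sheet_parity[OF s2 k2] m b by simp
    ultimately show "W1!k = W2!k" by (rule lift_vert_eqI)
  qed
qed

lemma closed_nb_walk_project_even: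
  assumes W: "W \<in> closed_nb_walks (enc ` (V \<times> UNIV)) (signed_lift E S) l"
  shows "even (sign_count S (map base W) l)"
proof -
  have s: "set W \<subseteq> enc ` (V \<times> UNIV)" "is_walk (signed_lift E S) W" "length W = Suc l" "W!0 = W!l"
    using W unfolding closed_nb_walks_def by auto
  then have "sheet (W!l) = (sheet (W!0) \<noteq> odd (sign_count S (map base W) l))"
    using sheet_parity[OF s(1,2), of l] by simp
  then show ?thesis using s(4) by (cases "sheet (W ! l)") auto
qed

lemma card_closed_nb_walks_lift_le:
  assumes "finite V"
  shows "card (closed_nb_walks (enc ` (V \<times> UNIV)) (signed_lift E S) l)
    \<le> 2 * card {W \<in> closed_nb_walks V E l. even (sign_count S W l)}"
proof -
  let ?C' = "closed_nb_walks (enc ` (V \<times> UNIV)) (signed_lift E S) l"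
  let ?T = "{W \<in> closed_nb_walks V E l. even (sign_count S W l)}"
  have "finite ?T" using finite_closed_nb_walks[OF assms] by simp
  have "card ?C' = card ((\<lambda>W. (map base W, sheet (W!0))) ` ?C')"
    by (rule card_image[OF inj_on_project_closed_nb_walks, symmetric])
  also have "\<dots> \<le> card (?T \<times> (UNIV :: bool set))"
    using \<open>finite ?T\<close> closed_nb_walk_project closed_nb_walk_project_even
    by (intro card_mono) (auto simp del: sign_count_def)
  also have "\<dots> = 2 * card ?T" by (simp add: card_cartesian_product)
  finally show ?thesis .
qed

section \<open>Lifts with fewer shortest cycles\<close>

definition toggle :: "'x set \<Rightarrow> 'x \<Rightarrow> 'x set" where
  "toggle S e = (if e \<in> S then S - {e} else insert e S)"

lemma toggle_toggle[simp]: "toggle (toggle S e) e = S"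
  unfolding toggle_def by auto

lemma toggle_subset: "S \<subseteq> E \<Longrightarrow> e \<in> E \<Longrightarrow> toggle S e \<subseteq> E"
  unfolding toggle_def by auto

lemma toggle_sign_count_parity:
  assumes g: "0 < g" and once: "\<forall>j<g. {W!j, W!Suc j} = {W!0, W!1} \<longrightarrow> j = 0"
  shows "even (sign_count (toggle S {W!0, W!1}) W g) \<longleftrightarrow> \<not> even (sign_count S W g)"
proof -
  let ?e = "{W!0, W!1}"
  let ?A = "{j. j < g \<and> {W!j, W!Suc j} \<in> S}"
  have fin: "finite ?A" by simp
  show ?thesis
  proof (cases "?e \<in> S")
    case True
    have "{j. j < g \<and> {W!j, W!Suc j} \<in> toggle S ?e} = ?A - {0}"
      using True once unfolding toggle_def by auto
    moreover have "0 \<in> ?A" using True g by simp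
    ultimately have "sign_count (toggle S ?e) W g = sign_count S W g - 1" "sign_count S W g \<ge> 1"
      unfolding sign_count_def using fin by (auto simp: card_Diff_singleton card_gt_0_iff Suc_le_eq)
    then show ?thesis by (metis One_nat_def Suc_diff_le diff_Suc_1 even_Suc le_add_diff_inverse2 plus_1_eq_Suc)
  next
    case False
    have "{j. j < g \<and> {W!j, W!Suc j} \<in> toggle S ?e} = insert 0 ?A"
      using False once g unfolding toggle_def by auto
    moreover have "0 \<notin> ?A" using False by simp
    ultimately have "sign_count (toggle S ?e) W g = Suc (sign_count S W g)"
      unfolding sign_count_def using fin by simp
    then show ?thesis by simp
  qed
qed

lemma card_Pow_half:
  assumes fin: "finite E" and e: "e \<in> E" and P: "\<And>S. P (toggle S e) \<longleftrightarrow> \<not> P S"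
  shows "2 * card {S \<in> Pow E. P S} = 2 ^ card E"
proof -
  have bij: "bij_betw (\<lambda>S. toggle S e) {S \<in> Pow E. P S} {S \<in> Pow E. \<not> P S}"
    apply (rule bij_betw_byWitness[where f' = "\<lambda>S. toggle S e"])
    using toggle_subset[OF _ e] by (auto simp: P)
  have c1: "card {S \<in> Pow E. P S} = card {S \<in> Pow E. \<not> P S}" using bij_betw_same_card[OF bij] .
  have "card (Pow E) = card {S \<in> Pow E. P S} + card {S \<in> Pow E. \<not> P S}"
  proof -
    have "Pow E = {S \<in> Pow E. P S} \<union> {S \<in> Pow E. \<not> P S}" by auto
    moreover have "{S \<in> Pow E. P S} \<inter> {S \<in> Pow E. \<not> P S} = {}" by auto
    ultimately show ?thesis using fin
      by (metis (no_types, lifting) card_Un_disjoint finite_Pow_iff finite_Un)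
  qed
  then show ?thesis using c1 fin by (simp add: card_Pow)
qed

lemma card_filter_sum: "finite C \<Longrightarrow> card {x \<in> C. P x} = (\<Sum>x\<in>C. if P x then 1 else 0)"
  by (simp add: sum.inter_filter[symmetric])

text \<open>Double counting: on average over \<open>S\<subseteq>E\<close>, \<open>Pr S\<close> holds on half of \<open>C\<close>, and on all of
  \<open>C\<close> for \<open>S = {}\<close>; so it holds on less than half for some \<open>S\<close>.\<close>

lemma exists_below_half:
  assumes finE: "finite E" and finC: "finite C" and ne: "C \<noteq> {}"
    and half: "\<And>W. W \<in> C \<Longrightarrow> 2 * card {S \<in> Pow E. Pr S W} = 2 ^ card E"
    and emp: "\<And>W. W \<in> C \<Longrightarrow> Pr {} W"
  shows "\<exists>S \<subseteq> E. 2 * card {W \<in> C. Pr S W} < card C"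
proof (rule ccontr)
  assume "\<not> ?thesis"
  then have ge: "\<And>S. S \<in> Pow E \<Longrightarrow> card C \<le> 2 * card {W \<in> C. Pr S W}" by (auto simp: not_less)
  have "(\<Sum>S\<in>Pow E. 2 * card {W \<in> C. Pr S W}) = (\<Sum>S\<in>Pow E. \<Sum>W\<in>C. 2 * (if Pr S W then 1 else 0))"
    using finC by (simp add: card_filter_sum sum_distrib_left)
  also have "\<dots> = (\<Sum>W\<in>C. \<Sum>S\<in>Pow E. 2 * (if Pr S W then 1 else 0))" by (rule sum.swap)
  also have "\<dots> = (\<Sum>W\<in>C. 2 * card {S \<in> Pow E. Pr S W})"
  proof (rule sum.cong[OF refl])
    fix W show "(\<Sum>S\<in>Pow E. 2 * (if Pr S W then 1 else 0)) = 2 * card {S \<in> Pow E. Pr S W}"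
      by (subst card_filter_sum) (use finE in \<open>simp_all add: sum_distrib_left\<close>)
  qed
  also have "\<dots> = (\<Sum>W\<in>C. 2 ^ card E)" using half by simp
  also have "\<dots> = card C * 2 ^ card E" by simp
  also have "\<dots> = (\<Sum>S\<in>Pow E. card C)" using finE by (simp add: card_Pow)
  finally have eq: "(\<Sum>S\<in>Pow E. 2 * card {W \<in> C. Pr S W}) = (\<Sum>S\<in>Pow E. card C)" .
  have "{W \<in> C. Pr {} W} = C" using emp by auto
  then have "card C < 2 * card {W \<in> C. Pr {} W}" using ne finC by (simp add: card_gt_0_iff)
  then have "(\<Sum>S\<in>Pow E. card C) < (\<Sum>S\<in>Pow E. 2 * card {W \<in> C. Pr S W})"
    using ge finE by (intro sum_strict_mono_ex1) auto
  then show False using eq by simp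
qed

lemma card_even_signings_shortest_walk:
  assumes simple: "simple_graph V E" and g: "g \<ge> 1" and girth: "girth_gt V E (g - 1)"
    and W: "W \<in> closed_nb_walks V E g"
  shows "2 * card {S \<in> Pow E. even (sign_count S W g)} = 2 ^ card E"
proof (rule card_Pow_half)
  show "finite E" by (rule simple_graph_finite_edges[OF simple])
  have "is_walk E W" "length W = Suc g" using W unfolding closed_nb_walks_def by auto
  then show "{W ! 0, W ! 1} \<in> E" using g unfolding is_walk_def by auto
  fix S show "even (sign_count (toggle S {W ! 0, W ! 1}) W g) \<longleftrightarrow> \<not> even (sign_count S W g)"
    using g shortest_closed_nb_walk_first_edge_once[OF simple W g girth]
    by (intro toggle_sign_count_parity) auto
qed

lemma exists_signing_reducing_shortest_walks:
  assumes simple: "simple_graph V E" and g: "g \<ge> 1" and girth: "girth_gt V E (g - 1)"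
    and nonempty: "closed_nb_walks V E g \<noteq> {}"
  shows "\<exists>S \<subseteq> E. card (closed_nb_walks (enc ` (V \<times> UNIV)) (signed_lift E S) g) < card (closed_nb_walks V E g)"
proof -
  let ?C = "closed_nb_walks V E g"
  have finV: "finite V" using simple_graph_finite[OF simple] .
  obtain S where S: "S \<subseteq> E" "2 * card {W \<in> ?C. even (sign_count S W g)} < card ?C"
    using exists_below_half[OF simple_graph_finite_edges[OF simple] finite_closed_nb_walks[OF finV] nonempty,
        of "\<lambda>S W. even (sign_count S W g)"]
      card_even_signings_shortest_walk[OF simple g girth] by auto
  then show ?thesis using card_closed_nb_walks_lift_le[OF finV, of E S g]
    by (intro exI[of _ S]) auto
qed

text \<open>Only the girth qualifies as \<open>g\<close> below, so a single signing serves all \<open>g\<close>.\<close>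

definition reducing_signing :: "('a \<times> bool list) set \<Rightarrow> ('a \<times> bool list) set set \<Rightarrow> ('a \<times> bool list) set set \<Rightarrow> bool" where
  "reducing_signing V E S = (S \<subseteq> E \<and> (\<forall>g. 1 \<le> g \<and> girth_gt V E (g - 1)
    \<and> closed_nb_walks V E g \<noteq> {} \<longrightarrow>
      card (closed_nb_walks (enc ` (V \<times> UNIV)) (signed_lift E S) g) < card (closed_nb_walks V E g)))"

lemma reducing_signing_exists:
  assumes simple: "simple_graph V E"
  shows "\<exists>S. reducing_signing V E S"
proof (cases "\<exists>g. 1 \<le> g \<and> girth_gt V E (g - 1) \<and> closed_nb_walks V E g \<noteq> {}")
  case False then show ?thesis unfolding reducing_signing_def by blast
next
  case True
  then obtain g0 where g0: "1 \<le> g0" "girth_gt V E (g0 - 1)" "closed_nb_walks V E g0 \<noteq> {}" by blast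
  obtain S where S: "S \<subseteq> E" "card (closed_nb_walks (enc ` (V \<times> UNIV)) (signed_lift E S) g0) < card (closed_nb_walks V E g0)"
    using exists_signing_reducing_shortest_walks[OF simple g0] by blast
  have uniq: "g = g0" if g: "1 \<le> g" "girth_gt V E (g - 1)" "closed_nb_walks V E g \<noteq> {}" for g
  proof (rule ccontr)
    assume "g \<noteq> g0"
    then consider "g < g0" | "g0 < g" by linarith
    then show False
    proof cases
      case 1 then show False using g0(2) g unfolding girth_gt_def by auto
    next
      case 2 then show False using g(2) g0 unfolding girth_gt_def by auto
    qed
  qed
  show ?thesis unfolding reducing_signing_def using S uniq by blast
qed

definition chosen_signing :: "('a \<times> bool list) set \<Rightarrow> ('a \<times> bool list) set set \<Rightarrow> ('a \<times> bool list) set set" where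
  "chosen_signing V E = (SOME S. reducing_signing V E S)"

lemma reducing_chosen_signing: "simple_graph V E \<Longrightarrow> reducing_signing V E (chosen_signing V E)"
  unfolding chosen_signing_def using reducing_signing_exists by (metis someI_ex)

section \<open>A tower of lifts of unbounded girth\<close>

lemma neighbours_image:
  assumes "inj f"
  shows "neighbours ((\<lambda>e. f ` e) ` E) (f x) = f ` neighbours E x"
proof
  show "neighbours ((\<lambda>e. f ` e) ` E) (f x) \<subseteq> f ` neighbours E x"
  proof
    fix z assume "z \<in> neighbours ((\<lambda>e. f ` e) ` E) (f x)"
    then obtain e where e: "e \<in> E" "{f x, z} = f ` e" unfolding neighbours_def by auto
    then obtain y where y: "y \<in> e" "z = f y" by (metis imageE insertI1 insert_commute)
    have "f ` e = f ` {x, y}" using e y by simp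
    then have "e = {x,y}" using inj_image_eq_iff[OF assms] by metis
    then show "z \<in> f ` neighbours E x" using e y unfolding neighbours_def by auto
  qed
next
  show "f ` neighbours E x \<subseteq> neighbours ((\<lambda>e. f ` e) ` E) (f x)"
  proof
    fix z assume "z \<in> f ` neighbours E x"
    then obtain y where "{x,y} \<in> E" "z = f y" unfolding neighbours_def by auto
    then show "z \<in> neighbours ((\<lambda>e. f ` e) ` E) (f x)" unfolding neighbours_def
      by (auto intro: rev_image_eqI)
  qed
qed

lemma simple_graph_image:
  assumes simple: "simple_graph V E" and inj: "inj f"
  shows "simple_graph (f ` V) ((\<lambda>e. f ` e) ` E)"
  unfolding simple_graph_def
proof (intro conjI ballI)
  show "finite (f ` V)" using simple_graph_finite[OF simple] by simp
next
  fix e assume "e \<in> (\<lambda>e. f ` e) ` E"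
  then obtain e0 where e0: "e0 \<in> E" "e = f ` e0" by blast
  then obtain u v where "u \<in> V" "v \<in> V" "u \<noteq> v" "e0 = {u,v}" using simple
    unfolding simple_graph_def by blast
  then show "\<exists>u v. u \<in> f ` V \<and> v \<in> f ` V \<and> u \<noteq> v \<and> e = {u, v}"
    using e0 inj by (intro exI[of _ "f u"] exI[of _ "f v"]) (auto simp: inj_eq)
qed

lemma biregular_sides_image:
  assumes "biregular_sides V E P Q p q" and inj: "inj f"
  shows "biregular_sides (f ` V) ((\<lambda>e. f ` e) ` E) (f ` P) (f ` Q) p q"
proof -
  interpret biregular_sides V E P Q p q by fact
  have sides: "card (neighbours ((\<lambda>e. f ` e) ` E) (f y)) = card (neighbours E y) \<and>
      (neighbours E y \<subseteq> Y \<longrightarrow> neighbours ((\<lambda>e. f ` e) ` E) (f y) \<subseteq> f ` Y)" for y Y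
    using card_image[OF inj_on_subset[OF inj]] by (auto simp: neighbours_image[OF inj])
  show ?thesis
  proof
    show "simple_graph (f ` V) ((\<lambda>e. f ` e) ` E)" by (rule simple_graph_image[OF simple inj])
    show "f ` P \<union> f ` Q = f ` V" using sides_cover by blast
  next
    fix x assume "x \<in> f ` P"
    then show "card (neighbours ((\<lambda>e. f ` e) ` E) x) = p \<and> neighbours ((\<lambda>e. f ` e) ` E) x \<subseteq> f ` Q"
      using sides P_neighbours by blast
  next
    fix x assume "x \<in> f ` Q"
    then show "card (neighbours ((\<lambda>e. f ` e) ` E) x) = q \<and> neighbours ((\<lambda>e. f ` e) ` E) x \<subseteq> f ` P"
      using sides Q_neighbours by blast
  qed
qed

fun tower_verts :: "'a set \<Rightarrow> nat \<Rightarrow> ('a \<times> bool list) set" where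
  "tower_verts V 0 = (\<lambda>v. (v, [])) ` V"
| "tower_verts V (Suc i) = enc ` (tower_verts V i \<times> UNIV)"

fun tower_edges :: "'a set \<Rightarrow> 'a set set \<Rightarrow> nat \<Rightarrow> ('a \<times> bool list) set set" where
  "tower_edges V E 0 = (\<lambda>e. (\<lambda>v. (v, [])) ` e) ` E"
| "tower_edges V E (Suc i) =
     signed_lift (tower_edges V E i) (chosen_signing (tower_verts V i) (tower_edges V E i))"

lemma inj_Nil_pair: "inj (\<lambda>v. (v, []))"
  by (rule injI) simp

lemma simple_graph_tower: "simple_graph V E \<Longrightarrow> simple_graph (tower_verts V i) (tower_edges V E i)"
  by (induction i) (simp_all add: simple_graph_image inj_Nil_pair simple_graph_signed_lift)

lemma biregular_sides_tower:
  "biregular_sides V E P Q p q \<Longrightarrow>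
     biregular_sides (tower_verts V i) (tower_edges V E i) (tower_verts P i) (tower_verts Q i) p q"
  by (induction i) (simp_all add: biregular_sides_image inj_Nil_pair biregular_sides_signed_lift)

lemma lift_sequence_tower: "lift_sequence V E (tower_verts V) (tower_edges V E)"
proof -
  have "lift_step (tower_verts V i) (tower_edges V E i) (tower_verts V (Suc i)) (tower_edges V E (Suc i))"
    for i
    unfolding lift_step_def tower_verts.simps tower_edges.simps signed_lift_def
    using two_lift_signed_two_lift by blast
  then show ?thesis unfolding lift_sequence_def by simp
qed

lemma tower_verts_nonempty: "V \<noteq> {} \<Longrightarrow> tower_verts V i \<noteq> {}"
  by (induction i) auto

lemma finite_tower_verts: "finite V \<Longrightarrow> finite (tower_verts V i)"
  by (induction i) auto

lemma girth_gt_tower_mono: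
  assumes "i \<le> j" "girth_gt (tower_verts V i) (tower_edges V E i) L"
  shows "girth_gt (tower_verts V j) (tower_edges V E j) L"
  using assms by (induction j rule: dec_induct) (simp_all add: girth_gt_signed_lift)

lemma girth_gt_tower_Suc:
  assumes simple: "simple_graph V E" and girth: "girth_gt (tower_verts V i) (tower_edges V E i) L"
  shows "\<exists>j. girth_gt (tower_verts V j) (tower_edges V E j) (Suc L)"
  using girth
proof (induction "card (closed_nb_walks (tower_verts V i) (tower_edges V E i) (Suc L))"
    arbitrary: i rule: less_induct)
  case less
  show ?case
  proof (cases "closed_nb_walks (tower_verts V i) (tower_edges V E i) (Suc L) = {}")
    case True
    then show ?thesis using less.prems girth_gt_Suc by blast
  next
    case False
    have "reducing_signing (tower_verts V i) (tower_edges V E i)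
        (chosen_signing (tower_verts V i) (tower_edges V E i))"
      by (rule reducing_chosen_signing[OF simple_graph_tower[OF simple]])
    then have "card (closed_nb_walks (tower_verts V (Suc i)) (tower_edges V E (Suc i)) (Suc L))
        < card (closed_nb_walks (tower_verts V i) (tower_edges V E i) (Suc L))"
      using less.prems False unfolding reducing_signing_def by simp
    moreover have "girth_gt (tower_verts V (Suc i)) (tower_edges V E (Suc i)) L"
      using less.prems by (simp add: girth_gt_signed_lift)
    ultimately show ?thesis by (rule less.hyps)
  qed
qed

lemma girth_gt_tower_eventually:
  assumes "simple_graph V E"
  shows "\<exists>N. girth_gt (tower_verts V N) (tower_edges V E N) L"
proof (induction L)
  case 0 show ?case unfolding girth_gt_def by simp
next
  case (Suc L) then show ?case using girth_gt_tower_Suc[OF assms] by blast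
qed

lemma tower_balls_eventually_trees:
  assumes sides: "biregular_sides V E P Q p q"
  shows "\<exists>N. \<forall>i\<ge>N. \<forall>v\<in>tower_verts P i.
     degree (tower_edges V E i) v = p \<and> ball_iso_tree (tower_edges V E i) v r p q"
proof -
  have simple: "simple_graph V E" using sides by (rule biregular_sides.simple)
  obtain N where N: "girth_gt (tower_verts V N) (tower_edges V E N) (2 * r + 1)"
    using girth_gt_tower_eventually[OF simple] by blast
  have "degree (tower_edges V E i) v = p \<and> ball_iso_tree (tower_edges V E i) v r p q"
    if "i \<ge> N" "v \<in> tower_verts P i" for i v
  proof -
    interpret rooted_biregular "tower_verts V i" "tower_edges V E i" "tower_verts P i" "tower_verts Q i" p q v
      by (intro rooted_biregular.intro rooted_biregular_axioms.intro biregular_sides_tower[OF sides] that(2))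
    show ?thesis
      using degree_eq_card_neighbours[OF simple] P_neighbours[OF that(2)]
        ball_iso_tree_if_girth_gt girth_gt_tower_mono[OF that(1) N] by simp
  qed
  then show ?thesis by blast
qed

section \<open>Benjamini--Schramm convergence of the tower\<close>

lemma regular_graph_biregular_sides:
  assumes "regular_graph V E d"
  shows "biregular_sides V E V V d d"
proof
  show simple: "simple_graph V E" using assms unfolding regular_graph_def by blast
  fix x assume "x \<in> V"
  then show "card (neighbours E x) = d \<and> neighbours E x \<subseteq> V"
    using assms degree_eq_card_neighbours[OF simple] neighbours_subset[OF simple]
    unfolding regular_graph_def by auto
qed simp_all

lemma biregular_bipartite_biregular_sides:
  assumes "biregular_bipartite V E a b"
  obtains A B where "biregular_sides V E A B a b"
proof -
  obtain A B where simple: "simple_graph V E" and AB: "A \<union> B = V" "A \<inter> B = {}"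
    and edges: "\<forall>e\<in>E. \<exists>u\<in>A. \<exists>w\<in>B. e = {u, w}"
    and deg: "\<forall>v\<in>A. degree E v = a" "\<forall>v\<in>B. degree E v = b"
    using assms unfolding biregular_bipartite_def by blast
  have other_side: "neighbours E x \<subseteq> Y"
    if "x \<in> X" "{X, Y} = {A, B}" for x X Y
  proof
    fix y assume "y \<in> neighbours E x"
    then obtain u w where "u \<in> A" "w \<in> B" "{x, y} = {u, w}"
      using edges unfolding neighbours_def by blast
    then show "y \<in> Y" using that AB(2) by (auto simp: doubleton_eq_iff)
  qed
  have "biregular_sides V E A B a b"
  proof
    fix x assume "x \<in> A"
    then show "card (neighbours E x) = a \<and> neighbours E x \<subseteq> B"
      using deg other_side[of x A B] degree_eq_card_neighbours[OF simple] by auto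
  next
    fix x assume "x \<in> B"
    then show "card (neighbours E x) = b \<and> neighbours E x \<subseteq> A"
      using deg other_side[of x B A] degree_eq_card_neighbours[OF simple]
        by (auto simp: insert_commute)
  qed (use simple AB in simp_all)
  then show ?thesis by (rule that)
qed

lemma fraction_tendsto_one:
  assumes "\<And>i. finite (A i)" "\<And>i. A i \<noteq> {}" and "\<exists>N. \<forall>i\<ge>N. \<forall>v\<in>A i. R i v"
  shows "(\<lambda>i. real (card {v \<in> A i. R i v}) / real (card (A i))) \<longlonglongrightarrow> 1"
proof (rule tendsto_eventually)
  obtain N where "\<forall>i\<ge>N. \<forall>v\<in>A i. R i v" using assms(3) by blast
  then have "\<forall>i\<ge>N. {v \<in> A i. R i v} = A i" by blast
  then show "\<forall>\<^sub>F i in sequentially. real (card {v \<in> A i. R i v}) / real (card (A i)) = 1"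
    unfolding eventually_sequentially using assms(1,2)
      by (metis card_0_eq divide_self of_nat_eq_0_iff)
qed

theorem regular_tower_BS_conv:
  assumes "regular_graph V E d" "V \<noteq> {}"
  shows "BS_conv_regular (tower_verts V) (tower_edges V E) d"
  unfolding BS_conv_regular_def
proof (intro allI impI fraction_tendsto_one)
  have sides: "biregular_sides V E V V d d" by (rule regular_graph_biregular_sides[OF assms(1)])
  fix r i :: nat
  show "finite (tower_verts V i)"
    using sides biregular_sides.simple simple_graph_finite finite_tower_verts by blast
  show "tower_verts V i \<noteq> {}" by (rule tower_verts_nonempty[OF assms(2)])
  show "\<exists>N. \<forall>i\<ge>N. \<forall>v\<in>tower_verts V i. ball_iso_tree (tower_edges V E i) v r d d"
    using tower_balls_eventually_trees[OF sides] by blast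
qed

theorem biregular_tower_BS_conv:
  assumes "biregular_bipartite V E a b" "V \<noteq> {}"
  shows "BS_conv_biregular (tower_verts V) (tower_edges V E) a b"
  unfolding BS_conv_biregular_def
proof (intro allI impI fraction_tendsto_one)
  obtain A B where sides: "biregular_sides V E A B a b"
    using biregular_bipartite_biregular_sides[OF assms(1)] by blast
  have parts: "tower_verts V i = tower_verts A i \<union> tower_verts B i" for i
    using biregular_sides_tower[OF sides] by (simp add: biregular_sides_def)
  fix r i :: nat
  show "finite (tower_verts V i)"
    using sides biregular_sides.simple simple_graph_finite finite_tower_verts by blast
  show "tower_verts V i \<noteq> {}" by (rule tower_verts_nonempty[OF assms(2)])
  obtain NA where NA: "\<forall>i\<ge>NA. \<forall>v\<in>tower_verts A i.
      degree (tower_edges V E i) v = a \<and> ball_iso_tree (tower_edges V E i) v r a b"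
    using tower_balls_eventually_trees[OF sides] by blast
  obtain NB where NB: "\<forall>i\<ge>NB. \<forall>v\<in>tower_verts B i.
      degree (tower_edges V E i) v = b \<and> ball_iso_tree (tower_edges V E i) v r b a"
    using tower_balls_eventually_trees[OF biregular_sides_swap[OF sides]] by blast
  show "\<exists>N. \<forall>i\<ge>N. \<forall>v\<in>tower_verts V i.
      degree (tower_edges V E i) v = a \<and> ball_iso_tree (tower_edges V E i) v r a b \<or>
      degree (tower_edges V E i) v = b \<and> ball_iso_tree (tower_edges V E i) v r b a"
    using NA NB unfolding parts by (intro exI[of _ "max NA NB"]) auto
qed

theorem corollary4p5:
  shows "(\<forall>(V :: 'a set) E d. regular_graph V E d \<and> V \<noteq> {} \<longrightarrow>
            (\<exists>Vs Es. lift_sequence V E Vs Es \<and> BS_conv_regular Vs Es d))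
       \<and> (\<forall>(V :: 'b set) E a b. biregular_bipartite V E a b \<and> V \<noteq> {} \<longrightarrow>
            (\<exists>Vs Es. lift_sequence V E Vs Es \<and> BS_conv_biregular Vs Es a b))"
proof (intro conjI allI impI)
  fix V :: "'a set" and E d assume "regular_graph V E d \<and> V \<noteq> {}"
  then show "\<exists>Vs Es. lift_sequence V E Vs Es \<and> BS_conv_regular Vs Es d"
    using lift_sequence_tower regular_tower_BS_conv by blast
next
  fix V :: "'b set" and E a b assume "biregular_bipartite V E a b \<and> V \<noteq> {}"
  then show "\<exists>Vs Es. lift_sequence V E Vs Es \<and> BS_conv_biregular Vs Es a b"
    using lift_sequence_tower biregular_tower_BS_conv by blast
qed

end
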